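(* Let $n\geqslant1$, let $p_1,\dots,p_n$ be distinct primes and $G=C_{p_1\cdots p_n}$. Then \[ \mathfrak{c}(G)\geqslant\begin{cases}\sum_{i=0}^{\lfloor\frac{n-1}{2}\rfloor}\binom{n}{n-i}\binom{n-i}{i+1} & n=2,4,6,\\[4pt] \sum_{i=0}^{\lfloor\frac{n-1}{2}\rfloor}\binom{n}{n-i}\binom{n-i}{i} & n\neq2,4,6.\end{cases} \] Moreover, this value is the maximal size of a rainbow on $\{0,\dots,n\}$, and it is attained by the complete rainbow when $n$ is odd, uniquely among rainbows by $R[n/2]$ when $n\geqslant8$ is even, and by both $R[0]$ and $R[n]$ when $n=2,4,6$.
   Context: For a finite group $G$, an arrow is a pair $(H,K)$ of subgroups with $H\leqslant K$; identity arrows are those with $H=K$. A $G$-transfer system is a set of arrows containing all identities and closed under composition ($(H,K),(K,L)\Rightarrow(H,L)$), conjugation ($(H,K)\Rightarrow(gHg^{-1},gKg^{-1})$) and restriction ($(H,K)$ and $L\leqslant K\Rightarrow(H\cap L,L)$). For a set $S$ of non-identity arrows, $\langle S\rangle$ is the smallest transfer system containing $S$. A minimal generating set of a transfer system $\mathsf{T}$ is a set $S\subseteq\mathsf{T}$ of non-identity arrows with $\langle S\rangle=\mathsf{T}$ and $\langle S\setminus\{s\}\rangle\neq\mathsf{T}$ for all $s\in S$; all such have the same cardinality $\mathfrak{m}(\mathsf{T})$. The complexity $\mathfrak{c}(G)$ is the maximum of $\mathfrak{m}(\mathsf{T})$ over all $G$-transfer systems $\mathsf{T}$. For $G=C_{p_1\cdots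 p_n}$ and $0\leqslant x<y\leqslant n$, the arc $\underline{x}\to\underline{y}$ stands for the set of all arrows $(H,K)$ where $|H|$ is a product of $x$ of the primes and $|K|$ a product of $y$ of the primes; it contains $\binom{n}{x,\,y-x,\,n-y}=\frac{n!}{x!(y-x)!(n-y)!}$ arrows. A rainbow on $\{0,\dots,n\}$ is a set of arcs $\{\underline{x_i}\to\underline{y_i}\}_{0\leqslant i\leqslant m}$ with $x_0<x_1<\dots<x_m<y_m<\dots<y_0$; its size is $\sum_i\binom{n}{x_i,\,y_i-x_i,\,n-y_i}$ (the number of arrows in the union of its arcs). For $n$ odd, the complete rainbow is the rainbow with arcs $\underline{i}\to\underline{n-i}$ for $0\leqslant i\leqslant\frac{n-1}{2}$ (every element of $\{0,\dots,n\}$ is an endpoint). For $n$ even and $0\leqslant x\leqslant n$, $R[x]$ is the rainbow with $\frac n2$ arcs whose endpoints are all elements of $\{0,\dots,n\}$ except $x$. Attaining the value means that the union of the arcs' arrows is a minimal generating set of the transfer system it generates, whose cardinality is the rainbow's size. *)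

theory Defs
  imports "HOL-Algebra.Elementary_Groups" "HOL-Computational_Algebra.Primes"
begin

definition arrows :: "('a, 'b) monoid_scheme \<Rightarrow> ('a set \<times> 'a set) set" where
  "arrows G = {(H, K). subgroup H G \<and> subgroup K G \<and> H \<subseteq> K}"

definition conj_set :: "('a, 'b) monoid_scheme \<Rightarrow> 'a \<Rightarrow> 'a set \<Rightarrow> 'a set" where
  "conj_set G g H = (\<lambda>h. g \<otimes>\<^bsub>G\<^esub> h \<otimes>\<^bsub>G\<^esub> inv\<^bsub>G\<^esub> g) ` H"

definition transfer_system :: "('a, 'b) monoid_scheme \<Rightarrow> ('a set \<times> 'a set) set \<Rightarrow> bool" where
  "transfer_system G T \<longleftrightarrow>
     T \<subseteq> arrows G \<and>
     (\<forall>H. subgroup H G \<longrightarrow> (H, H) \<in> T) \<and>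
     (\<forall>H K L. (H, K) \<in> T \<longrightarrow> (K, L) \<in> T \<longrightarrow> (H, L) \<in> T) \<and>
     (\<forall>H K g. (H, K) \<in> T \<longrightarrow> g \<in> carrier G \<longrightarrow> (conj_set G g H, conj_set G g K) \<in> T) \<and>
     (\<forall>H K L. (H, K) \<in> T \<longrightarrow> subgroup L G \<longrightarrow> L \<subseteq> K \<longrightarrow> (H \<inter> L, L) \<in> T)"

definition generated_ts :: "('a, 'b) monoid_scheme \<Rightarrow> ('a set \<times> 'a set) set \<Rightarrow> ('a set \<times> 'a set) set" where
  "generated_ts G S = \<Inter> {T. transfer_system G T \<and> S \<subseteq> T}"

definition min_gen_set :: "('a, 'b) monoid_scheme \<Rightarrow> ('a set \<times> 'a set) set \<Rightarrow> ('a set \<times> 'a set) set \<Rightarrow> bool" where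
  "min_gen_set G T S \<longleftrightarrow>
     S \<subseteq> T \<and> (\<forall>(H, K) \<in> S. H \<noteq> K) \<and> generated_ts G S = T \<and>
     (\<forall>s \<in> S. generated_ts G (S - {s}) \<noteq> T)"

text \<open>All minimal generating sets of T have the same cardinality m(T); we take the
  maximum of their cardinalities, which is that common value.\<close>
definition mfrak :: "('a, 'b) monoid_scheme \<Rightarrow> ('a set \<times> 'a set) set \<Rightarrow> nat" where
  "mfrak G T = Max {card S | S. min_gen_set G T S}"

definition complexity :: "('a, 'b) monoid_scheme \<Rightarrow> nat" where
  "complexity G = Max {mfrak G T | T. transfer_system G T}"

definition arc :: "('a, 'b) monoid_scheme \<Rightarrow> (nat \<Rightarrow> nat) \<Rightarrow> nat \<Rightarrow> nat \<Rightarrow> nat \<Rightarrow> ('a set \<times> 'a set) set" where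
  "arc G p n x y = {(H, K) \<in> arrows G.
      (\<exists>A \<subseteq> {..<n}. card A = x \<and> card H = (\<Prod>i\<in>A. p i)) \<and>
      (\<exists>B \<subseteq> {..<n}. card B = y \<and> card K = (\<Prod>i\<in>B. p i))}"

text \<open>A rainbow on {0..n} is a nonempty set of arcs, encoded by their endpoint pairs (x,y),
  x < y \<le> n, which are strictly nested: x_0 < ... < x_m < y_m < ... < y_0.\<close>
definition rainbow :: "nat \<Rightarrow> (nat \<times> nat) set \<Rightarrow> bool" where
  "rainbow n R \<longleftrightarrow> finite R \<and> R \<noteq> {} \<and>
     (\<forall>(x, y) \<in> R. x < y \<and> y \<le> n) \<and>
     (\<forall>(x, y) \<in> R. \<forall>(x', y') \<in> R. (x, y) \<noteq> (x', y') \<longrightarrow>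
         (x < x' \<and> y' < y) \<or> (x' < x \<and> y < y'))"

definition multinom3 :: "nat \<Rightarrow> nat \<Rightarrow> nat \<Rightarrow> nat" where
  "multinom3 n x y = fact n div (fact x * fact (y - x) * fact (n - y))"

definition rainbow_size :: "nat \<Rightarrow> (nat \<times> nat) set \<Rightarrow> nat" where
  "rainbow_size n R = (\<Sum>(x, y) \<in> R. multinom3 n x y)"

definition rainbow_arrows :: "('a, 'b) monoid_scheme \<Rightarrow> (nat \<Rightarrow> nat) \<Rightarrow> nat \<Rightarrow> (nat \<times> nat) set \<Rightarrow> ('a set \<times> 'a set) set" where
  "rainbow_arrows G p n R = (\<Union>(x, y) \<in> R. arc G p n x y)"

definition rainbow_attains :: "('a, 'b) monoid_scheme \<Rightarrow> (nat \<Rightarrow> nat) \<Rightarrow> nat \<Rightarrow> (nat \<times> nat) set \<Rightarrow> bool" where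
  "rainbow_attains G p n R \<longleftrightarrow>
     min_gen_set G (generated_ts G (rainbow_arrows G p n R)) (rainbow_arrows G p n R) \<and>
     card (rainbow_arrows G p n R) = rainbow_size n R"

definition complete_rainbow :: "nat \<Rightarrow> (nat \<times> nat) set" where
  "complete_rainbow n = {(i, n - i) | i. i \<le> (n - 1) div 2}"

text \<open>R[x] (n even): n/2 nested arcs whose endpoints are {0..n} - {x}.  With
  e_0 < ... < e_{n-1} the endpoints in increasing order, the arcs are e_i \<rightarrow> e_{n-1-i}.\<close>
definition rainbow_R :: "nat \<Rightarrow> nat \<Rightarrow> (nat \<times> nat) set" where
  "rainbow_R n x = (let e = (\<lambda>i. if i < x then i else i + 1)
                    in {(e i, e (n - 1 - i)) | i. i < n div 2})"

definition rainbow_bound :: "nat \<Rightarrow> nat" where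
  "rainbow_bound n =
     (if n \<in> {2, 4, 6}
      then (\<Sum>i = 0..(n - 1) div 2. (n choose (n - i)) * ((n - i) choose (i + 1)))
      else (\<Sum>i = 0..(n - 1) div 2. (n choose (n - i)) * ((n - i) choose i)))"

end

theory Submission
  imports Defs "HOL.Binomial_Plus" "HOL-Algebra.Multiplicative_Group"
begin

text \<open>Subgroups of a cyclic group of squarefree order \<open>p\<^sub>1\<cdots>p\<^sub>n\<close> correspond to sets of
  primes, so the arc \<open>x \<rightarrow> y\<close> consists of \<open>n! / (x! (y - x)! (n - y)!)\<close> arrows between
  subgroups of levels \<open>x\<close> and \<open>y\<close>. Composition and restriction do not raise levels, and the
  arcs of a rainbow are strictly nested; hence for every arrow \<open>s\<close> of a rainbow there is a
  transfer system containing all its other arrows but not \<open>s\<close>. So the arrows of a rainbow form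
  a minimal generating set, and the complexity is at least the size of every rainbow.

  For the maximal size, the arc \<open>x \<rightarrow> y\<close> has at most as many arrows as the balanced
  trinomial coefficient with the same defect \<open>x + (n - y)\<close>, and the defects of nested arcs
  differ by at least \<open>2\<close>. This bounds the size of a rainbow by the weight of a set of
  pairwise non-adjacent numbers in \<open>{0..n - 1}\<close>, where \<open>2t\<close> weighs \<open>n! / (t! t! (n - 2t)!)\<close>
  and \<open>2t + 1\<close> weighs \<open>n! / (t! (t + 1)! (n - 2t - 1)!)\<close>. The even weights beat the odd
  ones in the sense of partial sums, which comes down to the unimodality of the coefficients
  of \<open>(x\<inverse> + 1 + x)\<^sup>n\<close>, except for \<open>n = 2, 4, 6\<close>; all even numbers then form the heaviest
  set, i.e. the complete rainbow or \<open>R[n/2]\<close>. For even \<open>n \<ge> 8\<close> the inequalities are strict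
  because the central coefficient of \<open>(x\<inverse> + 1 + x)\<^sup>n\<close> exceeds its neighbour by more than
  the central binomial coefficient, which gives uniqueness.\<close>

section \<open>Trinomial coefficients\<close>

text \<open>\<open>trinomial n a c\<close> counts pairs of disjoint subsets of sizes \<open>a\<close> and \<open>c\<close> of an
  \<open>n\<close>-set, i.e. it is \<open>n! / (a! c! (n - a - c)!)\<close>; the recursion sorts the last element
  into the first set, the second set or neither.\<close>

fun trinomial :: "nat \<Rightarrow> nat \<Rightarrow> nat \<Rightarrow> nat" where
  "trinomial 0 a c = (if a = 0 \<and> c = 0 then 1 else 0)"
| "trinomial (Suc n) a c = (case a of 0 \<Rightarrow> 0 | Suc a' \<Rightarrow> trinomial n a' c)
     + (case c of 0 \<Rightarrow> 0 | Suc c' \<Rightarrow> trinomial n a c') + trinomial n a c"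

lemma trinomial_eq_0: "n < a + c \<Longrightarrow> trinomial n a c = 0"
  by (induction n arbitrary: a c) (auto split: nat.split)

lemma trinomial_0_0 [simp]: "trinomial n 0 0 = 1"
  by (induction n) simp_all

lemma trinomial_commute: "trinomial n a c = trinomial n c a"
  by (induction n arbitrary: a c) (auto split: nat.split)

lemma trinomial_fact:
  assumes "a + c \<le> n"
  shows "trinomial n a c * (fact a * fact c * fact (n - a - c)) = fact n"
  using assms
proof (induction n arbitrary: a c)
  case 0
  then show ?case by simp
next
  case (Suc n)
  define m where "m = Suc n - a - c"
  have first:
    "(case a of 0 \<Rightarrow> 0 | Suc a' \<Rightarrow> trinomial n a' c) * (fact a * fact c * fact m) = a * fact n"
  proof (cases a)
    case (Suc a')
    then have "trinomial n a' c * (fact a' * fact c * fact m) = fact n"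
      using Suc.IH[of a' c] Suc.prems by (simp add: m_def)
    then show ?thesis using Suc by (simp add: algebra_simps)
  qed simp
  have second:
    "(case c of 0 \<Rightarrow> 0 | Suc c' \<Rightarrow> trinomial n a c') * (fact a * fact c * fact m) = c * fact n"
  proof (cases c)
    case (Suc c')
    then have "trinomial n a c' * (fact a * fact c' * fact m) = fact n"
      using Suc.IH[of a c'] Suc.prems by (simp add: m_def)
    then show ?thesis using Suc by (simp add: algebra_simps)
  qed simp
  have neither: "trinomial n a c * (fact a * fact c * fact m) = m * fact n"
  proof (cases m)
    case 0
    then show ?thesis using Suc.prems trinomial_eq_0 by (simp add: m_def)
  next
    case (Suc m')
    then have "n - a - c = m'" by (simp add: m_def)
    then have "trinomial n a c * (fact a * fact c * fact m') = fact n"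
      using Suc.IH[of a c] Suc.prems Suc by (simp add: m_def)
    then show ?thesis using Suc by (simp add: algebra_simps)
  qed
  have "trinomial (Suc n) a c * (fact a * fact c * fact m) = (a + c + m) * fact n"
    using first second neither by (simp add: algebra_simps)
  then show ?case using Suc.prems by (simp add: m_def)
qed

lemma trinomial_pos: "a + c \<le> n \<Longrightarrow> 0 < trinomial n a c"
  using trinomial_fact[of a c n] by (metis fact_gt_zero gr0I mult_0)

lemma trinomial_unique:
  assumes "a + c \<le> n" and "k * (fact a * fact c * fact (n - a - c)) = fact n"
  shows "trinomial n a c = k"
proof -
  have "(0::nat) < fact a * fact c * fact (n - a - c)"
    by simp
  then show ?thesis
    using assms(2) trinomial_fact[OF assms(1)] by (metis mult_right_cancel not_less0)
qed

lemma trinomial_eq_choose: "trinomial n a c = (n choose a) * ((n - a) choose c)"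
proof (cases "a + c \<le> n")
  case True
  have "fact a * fact (n - a) * (n choose a) = fact n"
    using True binomial_fact_lemma[of a n] by simp
  moreover have "fact c * fact (n - a - c) * ((n - a) choose c) = fact (n - a)"
    using True binomial_fact_lemma[of c "n - a"] by simp
  ultimately show ?thesis
    by (intro trinomial_unique True) (metis mult.assoc mult.commute mult.left_commute)
next
  case False
  then show ?thesis
    using trinomial_eq_0[of n a c] by auto
qed

lemma trinomial_eq_choose_sum: "trinomial n a c = (n choose (a + c)) * ((a + c) choose a)"
proof (cases "a + c \<le> n")
  case True
  have h1: "fact (a + c) * fact (n - (a + c)) * (n choose (a + c)) = fact n"
    using True by (rule binomial_fact_lemma)
  have h2: "fact a * fact c * ((a + c) choose a) = fact (a + c)"
    using binomial_fact_lemma[of a "a + c"] by simp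
  have "(n choose (a + c)) * ((a + c) choose a) * (fact a * fact c * fact (n - a - c))
      = (fact a * fact c * ((a + c) choose a)) * fact (n - (a + c)) * (n choose (a + c))"
    by (simp add: diff_diff_add algebra_simps)
  also have "\<dots> = fact n"
    using h1 h2 by simp
  finally show ?thesis
    by (rule trinomial_unique[OF True])
qed (simp add: trinomial_eq_0)

lemma multinom3_eq_trinomial:
  assumes "x \<le> y" and "y \<le> n"
  shows "multinom3 n x y = trinomial n x (n - y)"
proof -
  have "trinomial n x (n - y) * (fact x * fact (n - y) * fact (n - x - (n - y))) = fact n"
    using assms by (intro trinomial_fact) simp
  moreover have "n - x - (n - y) = y - x"
    using assms by simp
  ultimately have "fact n = trinomial n x (n - y) * (fact x * fact (y - x) * fact (n - y))"
    by (simp add: algebra_simps)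
  then show ?thesis
    unfolding multinom3_def by (simp add: fact_gt_zero)
qed

lemma multinom3_eq_choose:
  assumes "x \<le> y" and "y \<le> n"
  shows "multinom3 n x y = (n choose y) * (y choose x)"
proof -
  have h1: "fact y * fact (n - y) * (n choose y) = fact n"
    using assms(2) by (rule binomial_fact_lemma)
  have h2: "fact x * fact (y - x) * (y choose x) = fact y"
    using assms(1) by (rule binomial_fact_lemma)
  have "(n choose y) * (y choose x) * (fact x * fact (y - x) * fact (n - y))
     = (fact x * fact (y - x) * (y choose x)) * fact (n - y) * (n choose y)"
    by (simp add: algebra_simps)
  also have "\<dots> = fact n"
    using h1 h2 by simp
  finally have "fact n = (n choose y) * (y choose x) * (fact x * fact (y - x) * fact (n - y))"
    by simp
  moreover have "(0::nat) < fact x * fact (y - x) * fact (n - y)"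
    by simp
  ultimately show ?thesis
    unfolding multinom3_def by simp
qed

lemma trinomial_Suc_right: "trinomial n a (Suc c) * Suc c = trinomial n a c * (n - a - c)"
proof (cases "a + Suc c \<le> n")
  case True
  have "n - a - c = Suc (n - a - Suc c)"
    using True by simp
  then have "fact (n - a - c) = (n - a - c) * fact (n - a - Suc c)"
    by (simp only: fact_Suc of_nat_id)
  then have "trinomial n a (Suc c) * Suc c * (fact a * fact c * fact (n - a - Suc c))
        = trinomial n a c * (n - a - c) * (fact a * fact c * fact (n - a - Suc c))"
    using trinomial_fact[OF True] trinomial_fact[of a c n] True by (simp add: algebra_simps)
  then show ?thesis
    by (simp add: fact_gt_zero)
qed (auto simp: trinomial_eq_0)

text \<open>Along the diagonal \<open>(t, t), (t, t + 1), (t + 1, t + 1)\<close> consecutive ratios are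
  \<open>(n - 2t)/(t + 1)\<close> and \<open>(n - 2t - 1)/(t + 1)\<close>, so the diagonal increases while
  \<open>3t + 2 \<le> n\<close> and decreases afterwards.\<close>

lemma trinomial_diagonal_increasing:
  assumes "3 * t + 2 \<le> n"
  shows "trinomial n t t \<le> trinomial n t (Suc t)"
    and "trinomial n t (Suc t) \<le> trinomial n (Suc t) (Suc t)"
proof -
  have "trinomial n t t * Suc t \<le> trinomial n t t * (n - 2 * t)"
    using assms by (intro mult_le_mono2) simp
  also have "\<dots> = trinomial n t (Suc t) * Suc t"
    using trinomial_Suc_right[of n t t] by (simp add: mult_2)
  finally show "trinomial n t t \<le> trinomial n t (Suc t)"
    by (simp only: mult_le_cancel2)
  have "trinomial n t (Suc t) * Suc t \<le> trinomial n t (Suc t) * (n - Suc (2 * t))"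
    using assms by (intro mult_le_mono2) simp
  also have "\<dots> = trinomial n (Suc t) (Suc t) * Suc t"
    using trinomial_Suc_right[of n "Suc t" t] trinomial_commute[of n "Suc t" t]
    by (simp add: mult_2)
  finally show "trinomial n t (Suc t) \<le> trinomial n (Suc t) (Suc t)"
    by (simp only: mult_le_cancel2)
qed

lemma trinomial_diagonal_decreasing:
  assumes "n < 3 * t + 2"
  shows "trinomial n t (Suc t) \<le> trinomial n t t"
    and "trinomial n (Suc t) (Suc t) \<le> trinomial n t (Suc t)"
proof -
  have "trinomial n t (Suc t) * Suc t = trinomial n t t * (n - 2 * t)"
    using trinomial_Suc_right[of n t t] by (simp add: mult_2)
  also have "\<dots> \<le> trinomial n t t * Suc t"
    using assms by (intro mult_le_mono2) simp
  finally show "trinomial n t (Suc t) \<le> trinomial n t t"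
    by (simp only: mult_le_cancel2)
  have "trinomial n (Suc t) (Suc t) * Suc t = trinomial n t (Suc t) * (n - Suc (2 * t))"
    using trinomial_Suc_right[of n "Suc t" t] trinomial_commute[of n "Suc t" t]
    by (simp add: mult_2)
  also have "\<dots> \<le> trinomial n t (Suc t) * Suc t"
    using assms by (intro mult_le_mono2) simp
  finally show "trinomial n (Suc t) (Suc t) \<le> trinomial n t (Suc t)"
    by (simp only: mult_le_cancel2)
qed

lemma trinomial_le_balanced: "trinomial n a c \<le> trinomial n ((a + c) div 2) (a + c - (a + c) div 2)"
proof -
  have "(a + c) choose a \<le> (a + c) choose ((a + c) div 2)"
    by (rule binomial_maximum)
  then show ?thesis
    unfolding trinomial_eq_choose_sum by (simp add: mult_le_mono2)
qed

lemma trinomial_less_balanced: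
  assumes "a + c = 2 * t" and "a \<noteq> c" and "a + c \<le> n"
  shows "trinomial n a c < trinomial n t t"
proof -
  have "(a + c) choose a < (a + c) choose t"
  proof (cases "a < t")
    case True
    then show ?thesis using assms(1) by (intro binomial_strict_mono) auto
  next
    case False
    then show ?thesis using assms(1,2) by (intro binomial_strict_antimono) auto
  qed
  then show ?thesis
    using assms by (simp add: trinomial_eq_choose_sum mult_2[symmetric])
qed

section \<open>Coefficients of \<open>(x\<inverse> + 1 + x)\<^sup>n\<close>\<close>

text \<open>\<open>trinomial_coeff n k\<close> is the coefficient of \<open>x\<^sup>k\<close> in \<open>(x\<inverse> + 1 + x)\<^sup>n\<close>.\<close>

definition trinomial_coeff :: "nat \<Rightarrow> nat \<Rightarrow> nat" where
  "trinomial_coeff n k = (\<Sum>t\<le>n. trinomial n t (t + k))"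

lemma trinomial_coeff_Suc:
  "trinomial_coeff (Suc n) k =
    (if k = 0 then 2 * trinomial_coeff n 1 + trinomial_coeff n 0
     else trinomial_coeff n (k - 1) + trinomial_coeff n k + trinomial_coeff n (k + 1))"
proof -
  have extend: "(\<Sum>t\<le>Suc n. trinomial n t (f t)) = (\<Sum>t\<le>n. trinomial n t (f t))" for f
    by (simp add: trinomial_eq_0)
  have split: "trinomial_coeff (Suc n) k =
      (\<Sum>t\<le>Suc n. (case t of 0 \<Rightarrow> 0 | Suc a' \<Rightarrow> trinomial n a' (t + k)))
     + (\<Sum>t\<le>Suc n. (case t + k of 0 \<Rightarrow> 0 | Suc c' \<Rightarrow> trinomial n t c'))
     + (\<Sum>t\<le>Suc n. trinomial n t (t + k))"
    unfolding trinomial_coeff_def by (simp add: sum.distrib)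
  have first: "(\<Sum>t\<le>Suc n. (case t of 0 \<Rightarrow> 0 | Suc a' \<Rightarrow> trinomial n a' (t + k)))
      = trinomial_coeff n (k + 1)"
    unfolding trinomial_coeff_def by (subst sum.atMost_Suc_shift) simp
  have neither: "(\<Sum>t\<le>Suc n. trinomial n t (t + k)) = trinomial_coeff n k"
    unfolding trinomial_coeff_def by (rule extend)
  show ?thesis
  proof (cases k)
    case 0
    have "(\<Sum>t\<le>Suc n. (case t + k of 0 \<Rightarrow> 0 | Suc c' \<Rightarrow> trinomial n t c'))
        = (\<Sum>t\<le>Suc n. (case t of 0 \<Rightarrow> 0 | Suc c' \<Rightarrow> trinomial n c' t))"
      using 0 by (intro sum.cong) (auto split: nat.split simp: trinomial_commute)
    also have "\<dots> = trinomial_coeff n 1"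
      unfolding trinomial_coeff_def by (subst sum.atMost_Suc_shift) simp
    finally show ?thesis
      using split first neither 0 by simp
  next
    case (Suc k')
    have "(\<Sum>t\<le>Suc n. (case t + k of 0 \<Rightarrow> 0 | Suc c' \<Rightarrow> trinomial n t c'))
        = (\<Sum>t\<le>Suc n. trinomial n t (t + k'))"
      using Suc by (intro sum.cong) auto
    also have "\<dots> = trinomial_coeff n k'"
      unfolding trinomial_coeff_def by (rule extend)
    finally show ?thesis
      using split first neither Suc by simp
  qed
qed

text \<open>The drops \<open>trinomial_coeff n k - trinomial_coeff n (k + 1)\<close> obey the recursion of
  \<open>trinomial_coeff\<close> with a reflection at \<open>k = 0\<close>; defining them by that recursion shows
  that they are natural numbers, i.e. the coefficients decrease away from the centre.\<close>

fun trinomial_drop :: "nat \<Rightarrow> nat \<Rightarrow> nat" where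
  "trinomial_drop 0 k = (if k = 0 then 1 else 0)"
| "trinomial_drop (Suc n) k = (case k of 0 \<Rightarrow> trinomial_drop n 1
     | Suc k' \<Rightarrow> trinomial_drop n k' + trinomial_drop n k + trinomial_drop n (Suc k))"

lemma trinomial_coeff_diff:
  "int (trinomial_coeff n k) - int (trinomial_coeff n (Suc k)) = int (trinomial_drop n k)"
proof (induction n arbitrary: k)
  case 0
  then show ?case by (simp add: trinomial_coeff_def)
next
  case (Suc n)
  show ?case
  proof (cases k)
    case 0
    then show ?thesis
      using Suc.IH[of 1] by (simp add: trinomial_coeff_Suc)
  next
    case (Suc k')
    then have "int (trinomial_coeff (Suc n) k) - int (trinomial_coeff (Suc n) (Suc k))
       = (int (trinomial_coeff n k') - int (trinomial_coeff n k))
         + (int (trinomial_coeff n k) - int (trinomial_coeff n (Suc k)))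
         + (int (trinomial_coeff n (Suc k)) - int (trinomial_coeff n (Suc (Suc k))))"
      by (simp add: trinomial_coeff_Suc)
    then show ?thesis
      using Suc.IH[of k'] Suc.IH[of k] Suc.IH[of "Suc k"] Suc by simp
  qed
qed

lemma trinomial_coeff_eq_drop:
  "trinomial_coeff n k = trinomial_coeff n (Suc k) + trinomial_drop n k"
  using trinomial_coeff_diff[of n k] by linarith

text \<open>\<open>walk_binomial n k\<close> is the number of \<open>\<plusminus>1\<close>-walks of length \<open>n\<close> from \<open>0\<close> that end
  at \<open>k\<close> or \<open>k + 1\<close>. Its recursion is that of \<open>trinomial_drop\<close> without the middle term,
  which yields the lower bounds for \<open>trinomial_drop\<close> below.\<close>

definition walk_binomial :: "nat \<Rightarrow> nat \<Rightarrow> nat" where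
  "walk_binomial n k = (if k \<le> n then n choose ((n - k) div 2) else 0)"

lemma walk_binomial_Suc:
  assumes "1 \<le> k"
  shows "walk_binomial (Suc n) k = walk_binomial n (k - 1) + walk_binomial n (k + 1)"
proof (cases "k + 1 \<le> n")
  case True
  define j where "j = (n - Suc k) div 2"
  have "(Suc n - k) div 2 = Suc j" and "(n - (k - 1)) div 2 = Suc j"
    using True assms unfolding j_def by presburger+
  then show ?thesis
    using True assms by (simp add: walk_binomial_def j_def add.commute)
next
  case False
  then show ?thesis
    using assms by (cases "k = Suc n") (auto simp: walk_binomial_def)
qed

lemma walk_binomial_Suc_le: "walk_binomial n (Suc k) \<le> walk_binomial n k"
  by (auto simp: walk_binomial_def intro: binomial_mono)

lemma walk_binomial_0_le: "walk_binomial (Suc m) 0 \<le> walk_binomial m 1 + walk_binomial (Suc m) 1"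
proof (cases "even m")
  case False
  then obtain e where m: "m = 2 * e + 1"
    by (rule oddE)
  have "Suc m choose Suc e = (m choose e) + (m choose Suc e)"
    by simp
  moreover have "m choose Suc e = m choose e"
    using m binomial_symmetric[of "Suc e" m] by simp
  moreover have "m choose e \<le> Suc m choose e"
    by (rule binomial_right_mono) simp
  ultimately show ?thesis
    using m by (simp add: walk_binomial_def)
qed (auto simp: walk_binomial_def)

lemma walk_binomial_0_less:
  assumes "even m" and "4 \<le> m"
  shows "walk_binomial m 0 < walk_binomial (m - 1) 1 + walk_binomial m 1"
proof -
  obtain e where "m = 2 * e"
    using assms(1) by blast
  moreover from this have "2 \<le> e"
    using assms(2) by simp
  then obtain e' where "e = e' + 2"
    using le_Suc_ex[OF \<open>2 \<le> e\<close>] by (auto simp: add.commute)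
  ultimately have m: "m = Suc (Suc (Suc (Suc (2 * e'))))"
    by simp
  have "m choose Suc (Suc e') = (Suc (Suc (Suc (2 * e'))) choose Suc e')
      + (Suc (Suc (Suc (2 * e'))) choose Suc (Suc e'))"
    using m by simp
  moreover have
    "Suc (Suc (Suc (2 * e'))) choose Suc (Suc e') = Suc (Suc (Suc (2 * e'))) choose Suc e'"
    using binomial_symmetric[of "Suc (Suc e')" "Suc (Suc (Suc (2 * e')))"] by simp
  moreover have "m choose Suc e' = (Suc (Suc (Suc (2 * e'))) choose e')
      + (Suc (Suc (Suc (2 * e'))) choose Suc e')"
    using m by simp
  moreover have "0 < Suc (Suc (Suc (2 * e'))) choose e'"
    by simp
  ultimately show ?thesis
    using m by (simp add: walk_binomial_def)
qed

lemma walk_binomial_bounded_by_drop: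
  "(\<forall>k\<ge>1. walk_binomial n k \<le> trinomial_drop n k)
    \<and> walk_binomial n 0 \<le> trinomial_drop n 0 + walk_binomial n 1"
proof (induction n)
  case 0
  then show ?case by (simp add: walk_binomial_def)
next
  case (Suc n)
  have IH: "walk_binomial n k \<le> trinomial_drop n k" if "1 \<le> k" for k
    using Suc.IH that by blast
  have IH0: "walk_binomial n 0 \<le> trinomial_drop n 0 + walk_binomial n 1"
    using Suc.IH by blast
  have "walk_binomial (Suc n) k \<le> trinomial_drop (Suc n) k" if k: "1 \<le> k" for k
  proof -
    obtain k' where k': "k = Suc k'"
      using k by (cases k) auto
    have "walk_binomial (Suc n) k = walk_binomial n k' + walk_binomial n (Suc (Suc k'))"
      using walk_binomial_Suc[OF k] k' by simp
    moreover have "trinomial_drop (Suc n) k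
        = trinomial_drop n k' + trinomial_drop n (Suc k') + trinomial_drop n (Suc (Suc k'))"
      using k' by simp
    ultimately show ?thesis
      using IH[of k'] IH[of "Suc (Suc k')"] IH0 IH[of 1]
      by (cases k') (simp_all add: numeral_2_eq_2)
  qed
  moreover have "walk_binomial (Suc n) 0 \<le> trinomial_drop (Suc n) 0 + walk_binomial (Suc n) 1"
    using walk_binomial_0_le[of n] IH[of 1] by simp
  ultimately show ?case
    by blast
qed

lemma walk_binomial_le_drop: "1 \<le> k \<Longrightarrow> walk_binomial n k \<le> trinomial_drop n k"
  using walk_binomial_bounded_by_drop by blast

lemma double_walk_binomial_le_drop_step:
  assumes IH: "\<And>j. 1 \<le> j \<Longrightarrow> j < Suc m \<Longrightarrow> 2 * walk_binomial (Suc m) j \<le> trinomial_drop (Suc m) j"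
    and IH1: "2 * walk_binomial m 1 \<le> trinomial_drop m 1"
    and "2 \<le> m" and "1 \<le> k" and "k < Suc (Suc m)"
  shows "2 * walk_binomial (Suc (Suc m)) k \<le> trinomial_drop (Suc (Suc m)) k"
proof -
  obtain k' where k': "k = Suc k'"
    using assms(4) by (cases k) auto
  have walk: "walk_binomial (Suc (Suc m)) k
      = walk_binomial (Suc m) k' + walk_binomial (Suc m) (Suc (Suc k'))"
    using walk_binomial_Suc[of k "Suc m"] assms(4) k' by simp
  have drop: "trinomial_drop (Suc (Suc m)) k = trinomial_drop (Suc m) k'
      + trinomial_drop (Suc m) (Suc k') + trinomial_drop (Suc m) (Suc (Suc k'))"
    using k' by simp
  show ?thesis
  proof (cases k')
    case 0
    have "walk_binomial (Suc m) 0 \<le> walk_binomial m 1 + walk_binomial (Suc m) 1"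
      by (rule walk_binomial_0_le)
    then show ?thesis
      using walk drop 0 assms(3) IH1 IH[of 1] IH[of 2] by (simp add: numeral_2_eq_2)
  next
    case (Suc k'')
    have "2 * walk_binomial (Suc m) k' \<le> trinomial_drop (Suc m) k'"
      using IH[of k'] Suc assms(5) k' by simp
    moreover have "walk_binomial (Suc m) (Suc (Suc k')) \<le> walk_binomial (Suc m) (Suc k')"
      by (rule walk_binomial_Suc_le)
    ultimately show ?thesis
      using walk drop walk_binomial_le_drop[of "Suc k'" "Suc m"]
        walk_binomial_le_drop[of "Suc (Suc k')" "Suc m"] by simp
  qed
qed

lemma double_walk_binomial_le_drop:
  assumes "6 \<le> n" and "1 \<le> k" and "k < n"
  shows "2 * walk_binomial n k \<le> trinomial_drop n k"
  using assms
proof (induction n arbitrary: k rule: less_induct)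
  case (less n)
  consider "n = 6" | "n = 7" | "8 \<le> n"
    using less.prems by linarith
  then show ?case
  proof cases
    case 1
    have "\<forall>k\<in>{1..<6}. 2 * walk_binomial 6 k \<le> trinomial_drop 6 k"
      by code_simp
    then show ?thesis
      using 1 less.prems by auto
  next
    case 2
    have "\<forall>k\<in>{1..<7}. 2 * walk_binomial 7 k \<le> trinomial_drop 7 k"
      by code_simp
    then show ?thesis
      using 2 less.prems by auto
  next
    case 3
    define m where "m = n - 2"
    then have n: "n = Suc (Suc m)" and "6 \<le> m"
      using 3 by simp_all
    have "2 * walk_binomial (Suc m) j \<le> trinomial_drop (Suc m) j" if "1 \<le> j" "j < Suc m" for j
      using less.IH[of "Suc m" j] n \<open>6 \<le> m\<close> that by simp
    moreover have "2 * walk_binomial m 1 \<le> trinomial_drop m 1"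
      using less.IH[of m 1] n \<open>6 \<le> m\<close> by simp
    ultimately show ?thesis
      unfolding n using less.prems n \<open>6 \<le> m\<close> by (intro double_walk_binomial_le_drop_step) auto
  qed
qed

lemma central_binomial_less_drop:
  assumes "even n" and "8 \<le> n"
  shows "n choose (n div 2) < trinomial_drop n 0"
proof (cases "n = 8")
  case True
  have "8 choose 4 < trinomial_drop 8 0"
    by code_simp
  then show ?thesis
    using True by simp
next
  case False
  define m where "m = n - 2"
  then have n: "n = Suc (Suc m)" and "8 \<le> m" and "even m"
    using assms False by presburger+
  have drop:
    "trinomial_drop n 0 = trinomial_drop (m - 1) 1 + trinomial_drop m 1 + trinomial_drop m 2"
    using n \<open>8 \<le> m\<close> by (cases m) (simp_all add: numeral_2_eq_2)
  have "walk_binomial m 0 < walk_binomial (m - 1) 1 + walk_binomial m 1"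
    using walk_binomial_0_less \<open>even m\<close> \<open>8 \<le> m\<close> by simp
  moreover have "2 * walk_binomial (m - 1) 1 \<le> trinomial_drop (m - 1) 1"
    and "2 * walk_binomial m 1 \<le> trinomial_drop m 1"
    and "2 * walk_binomial m 2 \<le> trinomial_drop m 2"
    using double_walk_binomial_le_drop \<open>8 \<le> m\<close> by simp_all
  moreover have "walk_binomial (Suc m) 1 = walk_binomial m 0 + walk_binomial m 2"
    using walk_binomial_Suc[of 1 m] by (simp add: numeral_2_eq_2)
  moreover have "n choose (n div 2) = 2 * walk_binomial (Suc m) 1"
  proof -
    obtain e where e: "m = 2 * e"
      using \<open>even m\<close> by blast
    have "n choose (n div 2) = (Suc m choose e) + (Suc m choose Suc e)"
      using n e by simp
    also have "Suc m choose Suc e = Suc m choose e"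
      using binomial_symmetric[of "Suc e" "Suc m"] e by simp
    finally show ?thesis
      using e by (simp add: walk_binomial_def)
  qed
  ultimately show ?thesis
    using drop by simp
qed

section \<open>Heaviest sparse sets of an interleaved sequence\<close>

definition sparse :: "nat set \<Rightarrow> bool" where
  "sparse S \<longleftrightarrow> (\<forall>s\<in>S. Suc s \<notin> S)"

definition interleave :: "(nat \<Rightarrow> int) \<Rightarrow> (nat \<Rightarrow> int) \<Rightarrow> nat \<Rightarrow> int" where
  "interleave A B s = (if even s then A (s div 2) else B (s div 2))"

lemma interleave_even [simp]: "interleave A B (2 * t) = A t"
  and interleave_odd [simp]: "interleave A B (Suc (2 * t)) = B t"
  and interleave_Suc_Suc_even [simp]: "interleave A B (Suc (Suc (2 * t))) = A (Suc t)"
  by (simp_all add: interleave_def)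

lemma sparse_subset: "sparse S \<Longrightarrow> S' \<subseteq> S \<Longrightarrow> sparse S'"
  unfolding sparse_def by blast

lemma sparse_Suc_notin: "sparse S \<Longrightarrow> s \<in> S \<Longrightarrow> Suc s \<notin> S"
  unfolding sparse_def by blast

text \<open>Besides sparse subsets of \<open>{..2K}\<close>, the induction below tracks the sparse subsets of
  \<open>{..2K + 1}\<close> containing \<open>2K + 1\<close>: the heaviest of them consist of all odd positions or of
  the even positions below \<open>2K\<close> together with \<open>2K + 1\<close>, whence the maximum in the bound.\<close>

locale single_crossing =
  fixes A B :: "nat \<Rightarrow> int"
  assumes A_nonneg: "0 \<le> A t"
    and crossing: "t \<le> t' \<Longrightarrow> B t < A t \<Longrightarrow> B t' \<le> A t'"
begin

lemma le_if_prefix_sum_less: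
  assumes "(\<Sum>t\<le>K. B t - A t) < B K - A K"
  shows "B K \<le> A K"
proof -
  obtain K' where K': "K = Suc K'" and "(\<Sum>t\<le>K'. B t - A t) < 0"
    using assms by (cases K) auto
  moreover have "0 \<le> (\<Sum>t\<le>K'. B t - A t)" if "\<forall>t\<le>K'. A t \<le> B t"
    using that by (intro sum_nonneg) simp
  ultimately obtain t where "t \<le> K'" and "B t < A t"
    by force
  then show ?thesis
    using crossing[of t K] K' by simp
qed

context
  fixes K :: nat
  assumes even_le: "\<And>S. sparse S \<Longrightarrow> S \<subseteq> {..2 * K} \<Longrightarrow>
      (\<Sum>s\<in>S. interleave A B s) \<le> (\<Sum>t\<le>K. A t)"
    and odd_le: "\<And>S. sparse S \<Longrightarrow> S \<subseteq> {..Suc (2 * K)} \<Longrightarrow> Suc (2 * K) \<in> S \<Longrightarrow>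
      (\<Sum>s\<in>S. interleave A B s) \<le> (\<Sum>t\<le>K. A t) + max (\<Sum>t\<le>K. B t - A t) (B K - A K)"
begin

lemma sparse_sum_le_even_step:
  assumes prefix: "max (\<Sum>t\<le>K. B t - A t) (B K - A K) \<le> A (Suc K)"
    and S: "sparse S" "S \<subseteq> {..2 * Suc K}"
  shows "(\<Sum>s\<in>S. interleave A B s) \<le> (\<Sum>t\<le>Suc K. A t)"
proof -
  have fin: "finite S"
    using S(2) finite_subset by blast
  consider "2 * Suc K \<in> S" | "2 * Suc K \<notin> S" "Suc (2 * K) \<in> S" | "2 * Suc K \<notin> S" "Suc (2 * K) \<notin> S"
    by blast
  then show ?thesis
  proof cases
    case 1
    then have "Suc (2 * K) \<notin> S"
      using S(1) sparse_Suc_notin[of S "Suc (2 * K)"] by auto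
    then have "S - {2 * Suc K} \<subseteq> {..2 * K}"
      using S(2) by (auto simp: le_Suc_eq)
    then have "(\<Sum>s\<in>S - {2 * Suc K}. interleave A B s) \<le> (\<Sum>t\<le>K. A t)"
      using even_le sparse_subset[OF S(1)] by blast
    then show ?thesis
      using sum.remove[OF fin 1, of "interleave A B"] by simp
  next
    case 2
    then have "S \<subseteq> {..Suc (2 * K)}"
      using S(2) by (auto simp: le_Suc_eq)
    then have "(\<Sum>s\<in>S. interleave A B s)
        \<le> (\<Sum>t\<le>K. A t) + max (\<Sum>t\<le>K. B t - A t) (B K - A K)"
      using odd_le[OF S(1) _ 2(2)] by blast
    moreover have "(\<Sum>t\<le>Suc K. A t) = (\<Sum>t\<le>K. A t) + A (Suc K)"
      by simp
    ultimately show ?thesis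
      using prefix by linarith
  next
    case 3
    then have "S \<subseteq> {..2 * K}"
      using S(2) by (auto simp: le_Suc_eq)
    then show ?thesis
      using even_le[OF S(1)] A_nonneg[of "Suc K"] by simp
  qed
qed

lemma sparse_sum_le_odd_step:
  assumes S: "sparse S" "S \<subseteq> {..Suc (2 * Suc K)}" "Suc (2 * Suc K) \<in> S"
  shows "(\<Sum>s\<in>S. interleave A B s)
    \<le> (\<Sum>t\<le>Suc K. A t) + max (\<Sum>t\<le>Suc K. B t - A t) (B (Suc K) - A (Suc K))"
proof -
  define S' where "S' = S - {Suc (2 * Suc K)}"
  have "2 * Suc K \<notin> S"
    using S(1,3) sparse_Suc_notin[of S "2 * Suc K"] by auto
  then have S': "sparse S'" "S' \<subseteq> {..Suc (2 * K)}"
    using S(1,2) sparse_subset[of S S'] by (auto simp: S'_def le_Suc_eq)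
  have "finite S"
    using S(2) finite_subset by blast
  then have split: "(\<Sum>s\<in>S. interleave A B s) = B (Suc K) + (\<Sum>s\<in>S'. interleave A B s)"
    using sum.remove[OF _ S(3), of "interleave A B"] by (simp add: S'_def del: mult_Suc_right)
  show ?thesis
  proof (cases "Suc (2 * K) \<in> S'")
    case True
    have rest: "(\<Sum>s\<in>S'. interleave A B s) \<le> (\<Sum>t\<le>K. A t) + max (\<Sum>t\<le>K. B t - A t) (B K - A K)"
      using odd_le[OF S' True] .
    show ?thesis
    proof (cases "B K - A K \<le> (\<Sum>t\<le>K. B t - A t)")
      case True
      then show ?thesis
        using split rest by simp
    next
      case False
      then show ?thesis
        using split rest le_if_prefix_sum_less[of K] by simp
    qed
  next
    case False
    then have "S' \<subseteq> {..2 * K}"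
      using S'(2) by (auto simp: le_Suc_eq)
    then show ?thesis
      using split even_le[OF S'(1)] by simp
  qed
qed

end

lemma sparse_sum_le:
  assumes "\<And>K'. K' < K \<Longrightarrow> max (\<Sum>t\<le>K'. B t - A t) (B K' - A K') \<le> A (Suc K')"
  shows "(\<forall>S. sparse S \<longrightarrow> S \<subseteq> {..2 * K} \<longrightarrow>
      (\<Sum>s\<in>S. interleave A B s) \<le> (\<Sum>t\<le>K. A t)) \<and>
    (\<forall>S. sparse S \<longrightarrow> S \<subseteq> {..Suc (2 * K)} \<longrightarrow> Suc (2 * K) \<in> S \<longrightarrow>
      (\<Sum>s\<in>S. interleave A B s) \<le> (\<Sum>t\<le>K. A t) + max (\<Sum>t\<le>K. B t - A t) (B K - A K))"
  using assms
proof (induction K)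
  case 0
  have "(\<Sum>s\<in>S. interleave A B s) \<le> (\<Sum>t\<le>0. A t)" if "S \<subseteq> {..0}" for S
  proof -
    have "S = {} \<or> S = {0}"
      using that by auto
    then show ?thesis
      using A_nonneg[of 0] by (auto simp: interleave_def)
  qed
  moreover have "(\<Sum>s\<in>S. interleave A B s) = (\<Sum>t\<le>0. A t) + (B 0 - A 0)"
    if "sparse S" "S \<subseteq> {..1}" "1 \<in> S" for S
  proof -
    have "S \<subseteq> {0, 1}"
      using that(2) by auto
    then have "S = {1}"
      using that sparse_Suc_notin[of S 0] by auto
    then show ?thesis
      by (simp add: interleave_def)
  qed
  ultimately show ?case
    by fastforce
next
  case (Suc K)
  then show ?case
    using sparse_sum_le_even_step[of K] sparse_sum_le_odd_step[of K] by simp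
qed

lemma sparse_sum_le_even:
  assumes "\<And>K'. K' < K \<Longrightarrow> max (\<Sum>t\<le>K'. B t - A t) (B K' - A K') \<le> A (Suc K')"
    and "sparse S" and "S \<subseteq> {..2 * K}"
  shows "(\<Sum>s\<in>S. interleave A B s) \<le> (\<Sum>t\<le>K. A t)"
  using sparse_sum_le[OF assms(1)] assms(2,3) by blast

lemma sparse_sum_le_odd:
  assumes "\<And>K'. K' < K \<Longrightarrow> max (\<Sum>t\<le>K'. B t - A t) (B K' - A K') \<le> A (Suc K')"
    and "sparse S" and "S \<subseteq> {..Suc (2 * K)}" and "Suc (2 * K) \<in> S"
  shows "(\<Sum>s\<in>S. interleave A B s) \<le> (\<Sum>t\<le>K. A t) + max (\<Sum>t\<le>K. B t - A t) (B K - A K)"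
  using sparse_sum_le[OF assms(1)] assms(2-4) by blast

lemma heavy_sparse_set_contains_top:
  assumes prefix: "\<And>K'. K' \<le> K \<Longrightarrow> max (\<Sum>t\<le>K'. B t - A t) (B K' - A K') < A (Suc K')"
    and pos: "0 < A (Suc K)" and S: "sparse S" "S \<subseteq> {..2 * Suc K}"
    and heavy: "(\<Sum>t\<le>Suc K. A t) \<le> (\<Sum>s\<in>S. interleave A B s)"
  shows "2 * Suc K \<in> S"
proof (rule ccontr)
  assume top: "2 * Suc K \<notin> S"
  have prefix_le: "max (\<Sum>t\<le>K'. B t - A t) (B K' - A K') \<le> A (Suc K')" if "K' < K" for K'
    using prefix[of K'] that by simp
  have sum_Suc: "(\<Sum>t\<le>Suc K. A t) = (\<Sum>t\<le>K. A t) + A (Suc K)"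
    by simp
  show False
  proof (cases "Suc (2 * K) \<in> S")
    case True
    then have "S \<subseteq> {..Suc (2 * K)}"
      using S(2) top by (auto simp: le_Suc_eq)
    then show False
      using sparse_sum_le_odd[OF prefix_le S(1) _ True] heavy prefix[of K] sum_Suc by linarith
  next
    case False
    then have "S \<subseteq> {..2 * K}"
      using S(2) top by (auto simp: le_Suc_eq)
    then show False
      using sparse_sum_le_even[OF prefix_le S(1)] heavy sum_Suc pos by fastforce
  qed
qed

lemma sparse_sum_eq_evens:
  assumes "\<And>K'. K' < K \<Longrightarrow> max (\<Sum>t\<le>K'. B t - A t) (B K' - A K') < A (Suc K')"
    and "\<And>t. t \<le> K \<Longrightarrow> 0 < A t" and "sparse S" and "S \<subseteq> {..2 * K}"
    and "(\<Sum>t\<le>K. A t) \<le> (\<Sum>s\<in>S. interleave A B s)"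
  shows "S = (\<lambda>t. 2 * t) ` {..K}"
  using assms
proof (induction K arbitrary: S)
  case 0
  then have "S = {} \<or> S = {0}"
    by auto
  then show ?case
    using "0.prems"(2)[of 0] "0.prems"(5) by auto
next
  case (Suc K)
  note prefix = Suc.prems(1) and S = Suc.prems(3,4) and heavy = Suc.prems(5)
  have top: "2 * Suc K \<in> S"
    using heavy_sparse_set_contains_top[OF _ _ S heavy] prefix Suc.prems(2) by simp
  then have "Suc (2 * K) \<notin> S"
    using S(1) sparse_Suc_notin[of S "Suc (2 * K)"] by auto
  then have "S - {2 * Suc K} \<subseteq> {..2 * K}"
    using S(2) by (auto simp: le_Suc_eq)
  moreover have "(\<Sum>t\<le>K. A t) \<le> (\<Sum>s\<in>S - {2 * Suc K}. interleave A B s)"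
    using heavy sum.remove[OF _ top, of "interleave A B"] S(2) finite_subset by fastforce
  ultimately have "S - {2 * Suc K} = (\<lambda>t. 2 * t) ` {..K}"
    using Suc.IH[OF _ _ sparse_subset[OF S(1)]] prefix Suc.prems(2) by force
  then show ?case
    using top by (auto simp: atMost_Suc)
qed

end

section \<open>Sparse sets weighted by trinomial coefficients\<close>

lemma sum_atMost_eq_if_vanishing:
  fixes f :: "nat \<Rightarrow> 'a::comm_monoid_add"
  assumes "\<And>t. m < t \<Longrightarrow> f t = 0" and "m \<le> K"
  shows "(\<Sum>t\<le>K. f t) = (\<Sum>t\<le>m. f t)"
  by (rule sum.mono_neutral_right) (use assms in auto)

text \<open>For \<open>K \<ge> n\<close> both sums are complete and differ by \<open>trinomial_drop n 0\<close>; going down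
  from there, past the turning point of the diagonal every step removes at least as much from
  the subdiagonal sum as from the diagonal one.\<close>

lemma subdiagonal_sum_le_high:
  assumes "n < 3 * K + 2"
  shows "(\<Sum>t\<le>K. trinomial n t (Suc t)) + trinomial_drop n 0 \<le> (\<Sum>t\<le>Suc K. trinomial n t t)"
proof -
  have full: "(\<Sum>t\<le>K. trinomial n t (Suc t)) + trinomial_drop n 0 = (\<Sum>t\<le>Suc K. trinomial n t t)"
    if "n \<le> K" for K
  proof -
    have "(\<Sum>t\<le>K. trinomial n t (Suc t)) = (\<Sum>t\<le>n. trinomial n t (Suc t))"
      by (rule sum_atMost_eq_if_vanishing) (use that trinomial_eq_0 in auto)
    moreover have "(\<Sum>t\<le>Suc K. trinomial n t t) = (\<Sum>t\<le>n. trinomial n t t)"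
      by (rule sum_atMost_eq_if_vanishing) (use that trinomial_eq_0 in auto)
    ultimately show ?thesis
      using trinomial_coeff_eq_drop[of n 0] by (simp add: trinomial_coeff_def)
  qed
  show ?thesis
  proof (cases "n \<le> K")
    case True
    then show ?thesis
      using full by simp
  next
    case False
    then have "K \<le> n"
      by simp
    then show ?thesis
      using assms
    proof (induction K rule: inc_induct)
      case base
      then show ?case
        using full by simp
    next
      case (step K)
      have "trinomial n (Suc (Suc K)) (Suc (Suc K)) \<le> trinomial n (Suc K) (Suc (Suc K))"
        using trinomial_diagonal_decreasing(2)[of n "Suc K"] step.prems by simp
      then show ?case
        using step.IH step.prems by simp
    qed
  qed
qed

lemma subdiagonal_sum_less_low:
  assumes "3 * K + 2 \<le> n"
  shows "(\<Sum>t\<le>K. trinomial n t (Suc t)) < (\<Sum>t\<le>Suc K. trinomial n t t)"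
proof -
  have "(\<Sum>t\<le>K. trinomial n t (Suc t)) \<le> (\<Sum>t\<le>K. trinomial n (Suc t) (Suc t))"
    by (intro sum_mono trinomial_diagonal_increasing(2)) (use assms in auto)
  moreover have "(\<Sum>t\<le>Suc K. trinomial n t t) = 1 + (\<Sum>t\<le>K. trinomial n (Suc t) (Suc t))"
    by (subst sum.atMost_Suc_shift) simp
  ultimately show ?thesis
    by simp
qed

definition trinomial_diag :: "nat \<Rightarrow> nat \<Rightarrow> int" where
  "trinomial_diag n t = int (trinomial n t t)"

definition trinomial_subdiag :: "nat \<Rightarrow> nat \<Rightarrow> int" where
  "trinomial_subdiag n t = int (trinomial n t (Suc t))"

lemma single_crossing_trinomial: "single_crossing (trinomial_diag n) (trinomial_subdiag n)"
proof
  fix t t' :: nat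
  assume "t \<le> t'" and "trinomial_subdiag n t < trinomial_diag n t"
  have "n < 3 * t + 2"
  proof (rule ccontr)
    assume "\<not> n < 3 * t + 2"
    then have "trinomial n t t \<le> trinomial n t (Suc t)"
      by (intro trinomial_diagonal_increasing(1)) simp
    then show False
      using \<open>trinomial_subdiag n t < trinomial_diag n t\<close>
      by (simp add: trinomial_diag_def trinomial_subdiag_def)
  qed
  then have "n < 3 * t' + 2"
    using \<open>t \<le> t'\<close> by linarith
  then show "trinomial_subdiag n t' \<le> trinomial_diag n t'"
    using trinomial_diagonal_decreasing(1) by (simp add: trinomial_diag_def trinomial_subdiag_def)
qed (simp add: trinomial_diag_def)

lemma trinomial_prefix_le:
  "max (\<Sum>t\<le>K. trinomial_subdiag n t - trinomial_diag n t)
       (trinomial_subdiag n K - trinomial_diag n K) \<le> trinomial_diag n (Suc K)"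
proof -
  have "(\<Sum>t\<le>K. trinomial n t (Suc t)) \<le> (\<Sum>t\<le>Suc K. trinomial n t t)"
    using subdiagonal_sum_le_high[of n K] subdiagonal_sum_less_low[of K n] by linarith
  moreover have "trinomial n K (Suc K) \<le> trinomial n (Suc K) (Suc K) + trinomial n K K"
    using trinomial_diagonal_increasing(2)[of K n] trinomial_diagonal_decreasing(1)[of n K]
    by linarith
  ultimately show ?thesis
    by (simp add: trinomial_diag_def trinomial_subdiag_def sum_subtractf of_nat_sum[symmetric]
        del: of_nat_sum)
qed

lemma trinomial_prefix_less:
  assumes "0 < trinomial_drop n 0" and "2 * Suc K \<le> n"
  shows "max (\<Sum>t\<le>K. trinomial_subdiag n t - trinomial_diag n t)
       (trinomial_subdiag n K - trinomial_diag n K) < trinomial_diag n (Suc K)"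
proof -
  have "(\<Sum>t\<le>K. trinomial n t (Suc t)) < (\<Sum>t\<le>Suc K. trinomial n t t)"
    using subdiagonal_sum_le_high[of n K] subdiagonal_sum_less_low[of K n] assms(1) by linarith
  moreover have "0 < trinomial n K K" and "0 < trinomial n (Suc K) (Suc K)"
    using assms(2) by (simp_all add: trinomial_pos)
  then have "trinomial n K (Suc K) < trinomial n (Suc K) (Suc K) + trinomial n K K"
    using trinomial_diagonal_increasing(2)[of K n] trinomial_diagonal_decreasing(1)[of n K]
    by linarith
  ultimately show ?thesis
    by (simp add: trinomial_diag_def trinomial_subdiag_def sum_subtractf of_nat_sum[symmetric]
        del: of_nat_sum)
qed

lemma interleave_trinomial:
  "interleave (trinomial_diag n) (trinomial_subdiag n) s
    = int (trinomial n (s div 2) (s - s div 2))"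
proof (cases "even s")
  case True
  then have "s - s div 2 = s div 2"
    by presburger
  then show ?thesis
    using True by (simp add: interleave_def trinomial_diag_def)
next
  case False
  then have "s - s div 2 = Suc (s div 2)"
    by presburger
  then show ?thesis
    using False by (simp add: interleave_def trinomial_subdiag_def)
qed

definition trinomial_weight :: "nat \<Rightarrow> nat set \<Rightarrow> int" where
  "trinomial_weight n S = (\<Sum>s\<in>S. interleave (trinomial_diag n) (trinomial_subdiag n) s)"

lemma trinomial_weight_le_odd:
  assumes "n = 2 * K + 1" and "sparse S" and "S \<subseteq> {..n - 1}"
  shows "trinomial_weight n S \<le> (\<Sum>t\<le>K. trinomial_diag n t)"
  unfolding trinomial_weight_def
  by (rule single_crossing.sparse_sum_le_even[OF single_crossing_trinomial])
    (use assms trinomial_prefix_le in auto)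

lemma trinomial_weight_le_even:
  assumes "n = 2 * K + 2" and "sparse S" and "S \<subseteq> {..n - 1}"
  shows "trinomial_weight n S \<le> (\<Sum>t\<le>K. trinomial_diag n t) +
    (if n - 1 \<in> S then max (\<Sum>t\<le>K. trinomial_subdiag n t - trinomial_diag n t)
                         (trinomial_subdiag n K - trinomial_diag n K)
     else 0)"
proof (cases "n - 1 \<in> S")
  case True
  then show ?thesis
    unfolding trinomial_weight_def
    using single_crossing.sparse_sum_le_odd[OF single_crossing_trinomial, where K = K and S = S]
      trinomial_prefix_le assms by simp
next
  case False
  then have "S \<subseteq> {..2 * K}"
    using assms by (auto simp: le_Suc_eq)
  then show ?thesis
    unfolding trinomial_weight_def
    using single_crossing.sparse_sum_le_even[OF single_crossing_trinomial, where K = K and S = S]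
      trinomial_prefix_le assms False by simp
qed

text \<open>For \<open>n = 2K + 2\<close> the subdiagonal sum up to \<open>K\<close> is all of \<open>trinomial_coeff n 1\<close>, while
  the diagonal sum lacks the central term \<open>n choose (K + 1)\<close> of \<open>trinomial_coeff n 0\<close>.\<close>

lemma trinomial_prefix_neg:
  assumes n: "n = 2 * K + 2" and "8 \<le> n"
  shows "max (\<Sum>t\<le>K. trinomial_subdiag n t - trinomial_diag n t)
       (trinomial_subdiag n K - trinomial_diag n K) < 0"
proof -
  have "trinomial n t (Suc t) = 0" if "K < t" for t
    using that n by (intro trinomial_eq_0) simp
  then have "(\<Sum>t\<le>K. trinomial n t (Suc t)) = (\<Sum>t\<le>n. trinomial n t (Suc t))"
    using n by (intro sum_atMost_eq_if_vanishing[symmetric]) auto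
  moreover have "trinomial n t t = 0" if "Suc K < t" for t
    using that n by (intro trinomial_eq_0) simp
  then have "(\<Sum>t\<le>n. trinomial n t t) = (\<Sum>t\<le>Suc K. trinomial n t t)"
    using n by (intro sum_atMost_eq_if_vanishing) auto
  moreover have "trinomial n (Suc K) (Suc K) = n choose Suc K"
    using n by (simp add: trinomial_eq_choose)
  moreover have "n choose Suc K < trinomial_drop n 0"
    using central_binomial_less_drop[of n] assms by simp
  ultimately have "(\<Sum>t\<le>K. trinomial n t (Suc t)) < (\<Sum>t\<le>K. trinomial n t t)"
    using trinomial_coeff_eq_drop[of n 0] by (simp add: trinomial_coeff_def)
  moreover have "trinomial n K (Suc K) < trinomial n K K"
  proof -
    have "trinomial n K (Suc K) * Suc K = trinomial n K K * 2"
      using trinomial_Suc_right[of n K K] n by simp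
    moreover have "0 < trinomial n K K"
      using n by (simp add: trinomial_pos)
    moreover have "2 < Suc K"
      using assms by simp
    then have "trinomial n K K * 2 < trinomial n K K * Suc K"
      using \<open>0 < trinomial n K K\<close> by (rule mult_less_mono2)
    ultimately have "trinomial n K (Suc K) * Suc K < trinomial n K K * Suc K"
      by (simp only: mult.commute[of 2])
    then show ?thesis
      using mult_less_cancel2 by blast
  qed
  ultimately show ?thesis
    by (simp add: trinomial_diag_def trinomial_subdiag_def sum_subtractf of_nat_sum[symmetric]
        del: of_nat_sum)
qed

lemma trinomial_weight_ge_imp_evens:
  assumes n: "n = 2 * K + 2" and "8 \<le> n" and S: "sparse S" "S \<subseteq> {..n - 1}"
    and heavy: "(\<Sum>t\<le>K. trinomial_diag n t) \<le> trinomial_weight n S"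
  shows "S = (\<lambda>t. 2 * t) ` {..K}"
proof -
  have "n - 1 \<notin> S"
    using trinomial_weight_le_even[OF n S] trinomial_prefix_neg[OF n assms(2)] heavy by auto
  then have sub: "S \<subseteq> {..2 * K}"
    using S(2) n by (auto simp: le_Suc_eq)
  have prefix: "max (\<Sum>t\<le>K'. trinomial_subdiag n t - trinomial_diag n t)
       (trinomial_subdiag n K' - trinomial_diag n K') < trinomial_diag n (Suc K')"
    if "K' < K" for K'
  proof (rule trinomial_prefix_less)
    have "even n"
      using n by simp
    then show "0 < trinomial_drop n 0"
      using central_binomial_less_drop[OF _ assms(2)] by linarith
    show "2 * Suc K' \<le> n"
      using that n by simp
  qed
  have pos: "0 < trinomial_diag n t" if "t \<le> K" for t
  proof -
    have "t + t \<le> n"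
      using that n by simp
    then show ?thesis
      by (simp add: trinomial_diag_def trinomial_pos)
  qed
  show ?thesis
    by (rule single_crossing.sparse_sum_eq_evens[OF single_crossing_trinomial prefix pos S(1) sub
          heavy[unfolded trinomial_weight_def]])
qed

section \<open>The maximal size of a rainbow\<close>

lemma rainbow_arcD: "rainbow n R \<Longrightarrow> (x, y) \<in> R \<Longrightarrow> x < y \<and> y \<le> n"
  unfolding rainbow_def by fast

lemma rainbow_nestedD:
  "rainbow n R \<Longrightarrow> (x, y) \<in> R \<Longrightarrow> (x', y') \<in> R \<Longrightarrow> (x, y) \<noteq> (x', y') \<Longrightarrow>
    (x < x' \<and> y' < y) \<or> (x' < x \<and> y < y')"
  unfolding rainbow_def by fast

lemma finite_rainbows: "finite {R. rainbow n R}"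
proof (rule finite_subset)
  show "{R. rainbow n R} \<subseteq> Pow ({..n} \<times> {..n})"
    by (auto dest: rainbow_arcD)
qed simp

text \<open>The arc \<open>x \<rightarrow> y\<close> consists of \<open>trinomial n x (n - y)\<close> arrows, which is at most the
  balanced trinomial coefficient with the same defect \<open>x + (n - y)\<close>. The defects of nested
  arcs differ by at least \<open>2\<close>, so the size of a rainbow is bounded by the weight of a sparse
  set of defects in \<open>{..n - 1}\<close>.\<close>

definition arc_defect :: "nat \<Rightarrow> nat \<times> nat \<Rightarrow> nat" where
  "arc_defect n q = fst q + (n - snd q)"

lemma rainbow_arc_defect_gap:
  assumes R: "rainbow n R" and "q \<in> R" and "q' \<in> R" and "q \<noteq> q'"
  shows "arc_defect n q + 2 \<le> arc_defect n q' \<or> arc_defect n q' + 2 \<le> arc_defect n q"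
proof -
  obtain x y x' y' where q: "q = (x, y)" and q': "q' = (x', y')"
    by fastforce
  have "y \<le> n" and "y' \<le> n"
    using rainbow_arcD[OF R] assms(2,3) q q' by auto
  moreover have "(x < x' \<and> y' < y) \<or> (x' < x \<and> y < y')"
    using rainbow_nestedD[OF R] assms(2-4) q q' by auto
  ultimately show ?thesis
    using q q' by (auto simp: arc_defect_def)
qed

lemma rainbow_arc_defect:
  assumes R: "rainbow n R"
  shows "inj_on (arc_defect n) R" and "sparse (arc_defect n ` R)" and "arc_defect n ` R \<subseteq> {..n - 1}"
proof -
  show "inj_on (arc_defect n) R"
    by (rule inj_onI) (use rainbow_arc_defect_gap[OF R] in fastforce)
  show "sparse (arc_defect n ` R)"
    unfolding sparse_def using rainbow_arc_defect_gap[OF R] by fastforce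
  show "arc_defect n ` R \<subseteq> {..n - 1}"
    using rainbow_arcD[OF R] by (force simp: arc_defect_def)
qed

lemma rainbow_size_eq_trinomial_sum:
  "rainbow n R \<Longrightarrow> rainbow_size n R = (\<Sum>q\<in>R. trinomial n (fst q) (n - snd q))"
  unfolding rainbow_size_def
  by (intro sum.cong refl) (auto simp: multinom3_eq_trinomial dest: rainbow_arcD)

lemma trinomial_le_interleave_defect:
  "int (trinomial n (fst q) (n - snd q))
    \<le> interleave (trinomial_diag n) (trinomial_subdiag n) (arc_defect n q)"
  unfolding interleave_trinomial arc_defect_def using trinomial_le_balanced by simp

lemma rainbow_size_le_weight:
  assumes R: "rainbow n R"
  shows "int (rainbow_size n R) \<le> trinomial_weight n (arc_defect n ` R)"
proof -
  have "int (rainbow_size n R) = (\<Sum>q\<in>R. int (trinomial n (fst q) (n - snd q)))"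
    using rainbow_size_eq_trinomial_sum[OF R] by simp
  also have "\<dots> \<le> (\<Sum>q\<in>R. interleave (trinomial_diag n) (trinomial_subdiag n) (arc_defect n q))"
    by (intro sum_mono trinomial_le_interleave_defect)
  also have "\<dots> = trinomial_weight n (arc_defect n ` R)"
    unfolding trinomial_weight_def by (simp add: sum.reindex[OF rainbow_arc_defect(1)[OF R]])
  finally show ?thesis .
qed

lemma rainbow_bound_eq_diag:
  "n \<notin> {2, 4, 6} \<Longrightarrow> rainbow_bound n = (\<Sum>t\<le>(n - 1) div 2. trinomial n t t)"
  unfolding rainbow_bound_def atLeast0AtMost
  by (auto intro!: sum.cong simp: trinomial_eq_choose binomial_symmetric[symmetric])

lemma rainbow_bound_eq_subdiag:
  "n \<in> {2, 4, 6} \<Longrightarrow> rainbow_bound n = (\<Sum>t\<le>(n - 1) div 2. trinomial n t (Suc t))"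
  unfolding rainbow_bound_def atLeast0AtMost
  by (auto intro!: sum.cong simp: trinomial_eq_choose binomial_symmetric[symmetric])

text \<open>For \<open>n \<in> {2, 4, 6}\<close> the odd positions \<open>1, 3, \<dots>, n - 1\<close> form the heaviest sparse set;
  the inequalities behind this are checked by evaluation.\<close>

lemma small_subdiag_prefix:
  assumes "n \<in> {2, 4, 6}"
  shows "0 \<le> (\<Sum>t\<le>(n - 1) div 2. trinomial_subdiag n t - trinomial_diag n t)"
    and "trinomial_subdiag n ((n - 1) div 2) - trinomial_diag n ((n - 1) div 2)
      \<le> (\<Sum>t\<le>(n - 1) div 2. trinomial_subdiag n t - trinomial_diag n t)"
  using assms by (auto simp: trinomial_diag_def trinomial_subdiag_def; code_simp)+

lemma trinomial_weight_le_bound: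
  assumes "1 \<le> n" and S: "sparse S" "S \<subseteq> {..n - 1}"
  shows "trinomial_weight n S \<le> int (rainbow_bound n)"
proof -
  define K where "K = (n - 1) div 2"
  have bound_diag: "int (rainbow_bound n) = (\<Sum>t\<le>K. trinomial_diag n t)" if "n \<notin> {2, 4, 6}"
    using that by (simp add: rainbow_bound_eq_diag K_def trinomial_diag_def)
  consider "odd n" | "even n" "n \<notin> {2, 4, 6}" | "n \<in> {2, 4, 6}"
    by blast
  then show ?thesis
  proof cases
    case 1
    then have n: "n = 2 * K + 1"
      using assms(1) by (simp add: K_def)
    have "n \<notin> {2, 4, 6}"
      using 1 by auto
    then show ?thesis
      using trinomial_weight_le_odd[OF n S] bound_diag by linarith
  next
    case 2
    then have n: "n = 2 * K + 2" and "8 \<le> n"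
      using assms(1) by (auto simp: K_def)
    then show ?thesis
      using trinomial_weight_le_even[OF n S] trinomial_prefix_neg[OF n] 2(2) bound_diag
      by (simp split: if_splits)
  next
    case 3
    then have n: "n = 2 * K + 2"
      by (auto simp: K_def)
    have "int (rainbow_bound n)
        = (\<Sum>t\<le>K. trinomial_diag n t) + (\<Sum>t\<le>K. trinomial_subdiag n t - trinomial_diag n t)"
      using 3 by (simp add: rainbow_bound_eq_subdiag K_def sum_subtractf trinomial_diag_def
          trinomial_subdiag_def)
    then show ?thesis
      using trinomial_weight_le_even[OF n S] small_subdiag_prefix[OF 3, folded K_def]
      by (simp split: if_splits)
  qed
qed

lemma rainbow_size_le_bound: "1 \<le> n \<Longrightarrow> rainbow n R \<Longrightarrow> rainbow_size n R \<le> rainbow_bound n"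
  using rainbow_size_le_weight trinomial_weight_le_bound rainbow_arc_defect by fastforce

lemma rainbow_arc_balanced:
  assumes R: "rainbow n R"
    and tight: "int (rainbow_size n R) = trinomial_weight n (arc_defect n ` R)"
    and q: "q \<in> R" and "arc_defect n q = 2 * t"
  shows "q = (t, n - t)"
proof -
  let ?f = "\<lambda>q. int (trinomial n (fst q) (n - snd q))"
  let ?g = "\<lambda>q. interleave (trinomial_diag n) (trinomial_subdiag n) (arc_defect n q)"
  have "?f q = ?g q"
  proof (rule ccontr)
    assume "?f q \<noteq> ?g q"
    then have "?f q < ?g q"
      using trinomial_le_interleave_defect[of n q] by simp
    then have "(\<Sum>q\<in>R. ?f q) < (\<Sum>q\<in>R. ?g q)"
      using R q trinomial_le_interleave_defect
      by (intro sum_strict_mono_ex1) (auto simp: rainbow_def)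
    moreover have "(\<Sum>q\<in>R. ?f q) = int (rainbow_size n R)"
      using rainbow_size_eq_trinomial_sum[OF R] by simp
    moreover have "(\<Sum>q\<in>R. ?g q) = trinomial_weight n (arc_defect n ` R)"
      unfolding trinomial_weight_def by (simp add: sum.reindex[OF rainbow_arc_defect(1)[OF R]])
    ultimately show False
      using tight by simp
  qed
  moreover obtain x y where xy: "q = (x, y)"
    by fastforce
  moreover have "x < y" "y \<le> n"
    using rainbow_arcD[OF R] q xy by auto
  moreover have "?g q = int (trinomial n t t)"
    using assms(4) by (simp add: trinomial_diag_def)
  ultimately have "x = n - y"
    using trinomial_less_balanced[of x "n - y" t n] assms(4) by (force simp: arc_defect_def)
  then show ?thesis
    using assms(4) xy \<open>y \<le> n\<close> by (auto simp: arc_defect_def)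
qed

lemma tight_rainbow_eq_if_defects_even:
  assumes R: "rainbow n R"
    and tight: "int (rainbow_size n R) = trinomial_weight n (arc_defect n ` R)"
    and defects: "arc_defect n ` R = (\<lambda>t. 2 * t) ` T"
  shows "R = (\<lambda>t. (t, n - t)) ` T"
proof
  have arcs: "q = (t, n - t)" if "q \<in> R" "arc_defect n q = 2 * t" for q t
    using rainbow_arc_balanced[OF R tight that] .
  show "R \<subseteq> (\<lambda>t. (t, n - t)) ` T"
  proof
    fix q
    assume "q \<in> R"
    then have "arc_defect n q \<in> (\<lambda>t. 2 * t) ` T"
      using defects by blast
    then show "q \<in> (\<lambda>t. (t, n - t)) ` T"
      using arcs[OF \<open>q \<in> R\<close>] by auto
  qed
  show "(\<lambda>t. (t, n - t)) ` T \<subseteq> R"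
  proof
    fix q
    assume "q \<in> (\<lambda>t. (t, n - t)) ` T"
    then obtain t where "t \<in> T" and q: "q = (t, n - t)"
      by auto
    then obtain q' where "q' \<in> R" and "arc_defect n q' = 2 * t"
      using defects by (metis (no_types, lifting) image_iff)
    then show "q \<in> R"
      using arcs q by auto
  qed
qed

lemma optimal_rainbow_unique:
  assumes "even n" and "8 \<le> n" and R: "rainbow n R" and opt: "rainbow_size n R = rainbow_bound n"
  shows "R = complete_rainbow n"
proof -
  define K where "K = (n - 1) div 2"
  define S where "S = arc_defect n ` R"
  have n: "n = 2 * K + 2"
    using assms(1,2) by (auto simp: K_def)
  have S: "sparse S" "S \<subseteq> {..n - 1}"
    using rainbow_arc_defect[OF R] by (simp_all add: S_def)
  have bound: "int (rainbow_bound n) = (\<Sum>t\<le>K. trinomial_diag n t)"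
    using assms(2) by (simp add: rainbow_bound_eq_diag K_def trinomial_diag_def)
  have "trinomial_weight n S \<le> (\<Sum>t\<le>K. trinomial_diag n t)"
    using trinomial_weight_le_even[OF n S] trinomial_prefix_neg[OF n assms(2)]
    by (simp split: if_splits)
  moreover have "int (rainbow_size n R) \<le> trinomial_weight n S"
    using rainbow_size_le_weight[OF R] by (simp add: S_def)
  ultimately have tight: "int (rainbow_size n R) = trinomial_weight n S"
    and heavy: "(\<Sum>t\<le>K. trinomial_diag n t) \<le> trinomial_weight n S"
    using bound opt by simp_all
  have "S = (\<lambda>t. 2 * t) ` {..K}"
    by (rule trinomial_weight_ge_imp_evens[OF n assms(2) S heavy])
  then have "R = (\<lambda>t. (t, n - t)) ` {..K}"
    using tight_rainbow_eq_if_defects_even[OF R] tight by (simp add: S_def)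
  then show ?thesis
    by (auto simp: complete_rainbow_def K_def)
qed

lemma rainbow_nested_image:
  fixes x y :: "nat \<Rightarrow> nat"
  assumes arcs: "\<And>i. i \<le> m \<Longrightarrow> x i < y i \<and> y i \<le> n"
    and nested: "\<And>i j. i < j \<Longrightarrow> j \<le> m \<Longrightarrow> x i < x j \<and> y j < y i"
  shows "rainbow n ((\<lambda>i. (x i, y i)) ` {..m})"
    and "rainbow_size n ((\<lambda>i. (x i, y i)) ` {..m}) = (\<Sum>i\<le>m. multinom3 n (x i) (y i))"
proof -
  show "rainbow n ((\<lambda>i. (x i, y i)) ` {..m})"
    unfolding rainbow_def using arcs nested
    by (auto simp: le_less_trans) (metis linorder_neqE_nat le_less_trans)+
  have "inj_on (\<lambda>i. (x i, y i)) {..m}"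
    by (rule inj_onI) (metis atMost_iff le_less_trans linorder_neqE_nat nested nat_less_le
        prod.inject)
  then show "rainbow_size n ((\<lambda>i. (x i, y i)) ` {..m}) = (\<Sum>i\<le>m. multinom3 n (x i) (y i))"
    by (simp add: rainbow_size_def sum.reindex)
qed

lemma complete_rainbow_eq_image: "complete_rainbow n = (\<lambda>i. (i, n - i)) ` {..(n - 1) div 2}"
  unfolding complete_rainbow_def by auto

lemma rainbow_R_eq_image:
  assumes "even n" and "2 \<le> n"
  shows "rainbow_R n x = (\<lambda>i. (if i < x then i else Suc i,
      if n - 1 - i < x then n - 1 - i else Suc (n - 1 - i))) ` {..(n - 1) div 2}"
proof -
  have "{..<n div 2} = {..(n - 1) div 2}"
    using assms by auto
  then show ?thesis
    unfolding rainbow_R_def Let_def by (auto simp: setcompr_eq_image)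
qed

lemma rainbow_R_half: "even n \<Longrightarrow> 2 \<le> n \<Longrightarrow> rainbow_R n (n div 2) = complete_rainbow n"
  unfolding rainbow_R_eq_image complete_rainbow_eq_image by (intro image_cong) auto

lemma complete_rainbow_optimal:
  assumes "1 \<le> n" and "n \<notin> {2, 4, 6}"
  shows "rainbow n (complete_rainbow n)" and "rainbow_size n (complete_rainbow n) = rainbow_bound n"
proof -
  have arcs: "i < n - i \<and> n - i \<le> n" if "i \<le> (n - 1) div 2" for i
    using that assms by auto
  show "rainbow n (complete_rainbow n)"
    unfolding complete_rainbow_eq_image by (rule rainbow_nested_image) (use arcs in auto)
  have "rainbow_size n (complete_rainbow n) = (\<Sum>i\<le>(n - 1) div 2. multinom3 n i (n - i))"
    unfolding complete_rainbow_eq_image by (rule rainbow_nested_image) (use arcs in auto)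
  also have "\<dots> = rainbow_bound n"
    using arcs assms(2) by (auto simp: rainbow_bound_eq_diag multinom3_eq_trinomial intro: sum.cong)
  finally show "rainbow_size n (complete_rainbow n) = rainbow_bound n" .
qed

lemma rainbow_R_end_optimal:
  assumes n: "n \<in> {2, 4, 6}" and x: "x \<in> {0, n}"
  shows "rainbow n (rainbow_R n x)" and "rainbow_size n (rainbow_R n x) = rainbow_bound n"
proof -
  define a where "a i = (if x = 0 then Suc i else i)" for i
  define b where "b i = (if x = 0 then n - i else n - 1 - i)" for i
  have "even n" and "2 \<le> n"
    using n by auto
  then have R: "rainbow_R n x = (\<lambda>i. (a i, b i)) ` {..(n - 1) div 2}"
    unfolding rainbow_R_eq_image[OF \<open>even n\<close> \<open>2 \<le> n\<close>]
    using x by (intro image_cong) (auto simp: a_def b_def)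
  have arcs: "a i < b i \<and> b i \<le> n" if "i \<le> (n - 1) div 2" for i
    using that n by (auto simp: a_def b_def)
  have nested: "a i < a j \<and> b j < b i" if "i < j" "j \<le> (n - 1) div 2" for i j
    using that n by (auto simp: a_def b_def)
  show "rainbow n (rainbow_R n x)"
    unfolding R by (rule rainbow_nested_image) (use arcs nested in auto)
  have "rainbow_size n (rainbow_R n x) = (\<Sum>i\<le>(n - 1) div 2. multinom3 n (a i) (b i))"
    unfolding R by (rule rainbow_nested_image) (use arcs nested in auto)
  also have "\<dots> = (\<Sum>i\<le>(n - 1) div 2. trinomial n i (Suc i))"
  proof (rule sum.cong)
    fix i
    assume "i \<in> {..(n - 1) div 2}"
    then have "a i \<le> b i" "b i \<le> n" and "trinomial n (a i) (n - b i) = trinomial n i (Suc i)"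
      using n x arcs[of i] by (auto simp: a_def b_def trinomial_commute)
    then show "multinom3 n (a i) (b i) = trinomial n i (Suc i)"
      by (simp add: multinom3_eq_trinomial)
  qed simp
  also have "\<dots> = rainbow_bound n"
    using n by (simp add: rainbow_bound_eq_subdiag)
  finally show "rainbow_size n (rainbow_R n x) = rainbow_bound n" .
qed

section \<open>Subgroups of a cyclic group of squarefree order\<close>

lemma dvd_prod_primes_eq:
  fixes p :: "'i \<Rightarrow> nat"
  assumes "finite I" and "\<forall>i\<in>I. prime (p i)" and "inj_on p I" and "d dvd (\<Prod>i\<in>I. p i)"
  shows "d = (\<Prod>i\<in>{i\<in>I. p i dvd d}. p i)"
  using assms
proof (induction I arbitrary: d rule: finite_induct)
  case empty
  then show ?case by simp
next
  case (insert j J)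
  have pj: "prime (p j)" and primes: "\<forall>i\<in>J. prime (p i)" and inj: "inj_on p J"
    using insert.prems by auto
  have d: "d dvd p j * (\<Prod>i\<in>J. p i)"
    using insert.prems(3) insert.hyps by simp
  show ?case
  proof (cases "p j dvd d")
    case True
    then obtain d' where d': "d = p j * d'"
      by blast
    then have "d' dvd (\<Prod>i\<in>J. p i)"
      using d pj by (simp add: prime_gt_0_nat)
    then have IH: "d' = (\<Prod>i\<in>{i\<in>J. p i dvd d'}. p i)"
      using insert.IH primes inj by blast
    have "p i dvd d \<longleftrightarrow> p i dvd d'" if "i \<in> J" for i
    proof -
      have "p i \<noteq> p j"
        using insert.prems(2) insert.hyps(2) that by (auto simp: inj_on_def)
      then have "\<not> p i dvd p j"
        using primes pj that primes_dvd_imp_eq by blast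
      then show ?thesis
        using d' primes that by (auto simp: prime_dvd_mult_iff)
    qed
    then have "{i \<in> insert j J. p i dvd d} = insert j {i\<in>J. p i dvd d'}"
      using True by auto
    then show ?thesis
      using IH d' insert.hyps by simp
  next
    case False
    then have "coprime d (p j)"
      using pj prime_imp_coprime coprime_commute by blast
    then have "d dvd (\<Prod>i\<in>J. p i)"
      using d coprime_dvd_mult_right_iff by blast
    moreover have "{i \<in> insert j J. p i dvd d} = {i\<in>J. p i dvd d}"
      using False by auto
    ultimately show ?thesis
      using insert.IH primes inj by simp
  qed
qed

lemma primes_dvd_prod_primes:
  fixes p :: "'i \<Rightarrow> nat"
  assumes "A \<subseteq> I" and "\<forall>i\<in>I. prime (p i)" and "inj_on p I" and "finite A"
  shows "{i\<in>I. p i dvd (\<Prod>i\<in>A. p i)} = A"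
proof
  show "A \<subseteq> {i\<in>I. p i dvd (\<Prod>i\<in>A. p i)}"
    using assms(1,4) by (auto intro: dvd_prodI)
  show "{i\<in>I. p i dvd (\<Prod>i\<in>A. p i)} \<subseteq> A"
  proof
    fix i
    assume i: "i \<in> {i\<in>I. p i dvd (\<Prod>i\<in>A. p i)}"
    then have pi: "prime (p i)"
      using assms(2) by simp
    then obtain j where j: "j \<in> A" "p i dvd p j"
      using i prime_dvd_prod_iff[OF assms(4) pi] by blast
    then have "p i = p j"
      using pi assms(1,2) primes_dvd_imp_eq by blast
    then show "i \<in> A"
      using assms(1,3) i j(1) by (auto simp: inj_on_def)
  qed
qed

lemma (in group) card_subgroup_dvd:
  assumes "finite (carrier G)" and "subgroup H G" and "subgroup K G" and "H \<subseteq> K"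
  shows "card H dvd card K"
proof -
  interpret K: group "G\<lparr>carrier := K\<rparr>"
    using subgroup.subgroup_is_group[OF assms(3) is_group] .
  have "finite K"
    using assms(1,3) subgroup.subset finite_subset by blast
  moreover have "subgroup H (G\<lparr>carrier := K\<rparr>)"
    by (rule subgroup_incl[OF assms(2-4)])
  ultimately show ?thesis
    using K.lagrange by (metis dvd_triv_right order_def partial_object.select_convs(1)
        partial_object.surjective partial_object.update_convs(1))
qed

locale finite_cyclic_group = group +
  assumes finite_carrier: "finite (carrier G)" and cyclic: "cyclic_group G"
begin

lemma comm_group: "comm_group G"
  using cyclic cyclic_imp_abelian_group by blast

lemma card_carrier_pos: "0 < card (carrier G)"
  using finite_carrier one_closed by (auto simp: card_gt_0_iff)

lemma generator_exists:
  "\<exists>x\<in>carrier G. ord x = card (carrier G) \<and> carrier G = (\<lambda>k. x [^] k) ` {..<card (carrier G)}"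
proof -
  obtain x where x: "x \<in> carrier G" "subgroup_generated G {x} = G"
    using cyclic unfolding cyclic_group_def by blast
  then have "carrier G = generate G {x}"
    using carrier_subgroup_generated[of G "{x}"] by (metis Int_absorb1 empty_subsetI insert_subset)
  moreover have "generate G {x} = {x [^] k | k. k \<in> {0..ord x - 1}}"
    using generate_pow_on_finite_carrier[OF finite_carrier x(1)] ord_elems[OF finite_carrier x(1)]
    by simp
  moreover have ord: "ord x = card (carrier G)"
    using generate_pow_card[OF x(1)] calculation(1) by simp
  moreover have "{x [^] k | k. k \<in> {0..ord x - 1}} = (\<lambda>k. x [^] k) ` {..<card (carrier G)}"
    using ord card_carrier_pos by auto
  ultimately show ?thesis
    using x(1) by auto
qed

definition torsion :: "nat \<Rightarrow> 'a set" where
  "torsion d = {y \<in> carrier G. y [^] d = \<one>}"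

lemma subgroup_torsion: "subgroup (torsion d) G"
proof (rule subgroupI)
  interpret comm_group G
    by (rule comm_group)
  show "torsion d \<subseteq> carrier G" and "torsion d \<noteq> {}"
    by (auto simp: torsion_def)
  show "inv a \<in> torsion d" if "a \<in> torsion d" for a
    using that by (auto simp: torsion_def nat_pow_inv)
  show "a \<otimes> b \<in> torsion d" if "a \<in> torsion d" and "b \<in> torsion d" for a b
    using that by (auto simp: torsion_def pow_mult_distrib m_comm)
qed

lemma torsion_eq_image:
  assumes x: "x \<in> carrier G" "ord x = card (carrier G)"
    and gen: "carrier G = (\<lambda>k. x [^] k) ` {..<card (carrier G)}"
    and m: "card (carrier G) = d * m"
  shows "torsion d = (\<lambda>j. x [^] (j * m)) ` {..<d}"
proof
  show "(\<lambda>j. x [^] (j * m)) ` {..<d} \<subseteq> torsion d"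
  proof
    fix y
    assume "y \<in> (\<lambda>j. x [^] (j * m)) ` {..<d}"
    then obtain j where y: "y = x [^] (j * m)"
      by blast
    have "y [^] d = (x [^] card (carrier G)) [^] j"
      using y x(1) m by (simp add: nat_pow_pow algebra_simps)
    also have "\<dots> = \<one>"
      using pow_ord_eq_1[OF x(1)] x(2) by simp
    finally show "y \<in> torsion d"
      using y x(1) by (simp add: torsion_def)
  qed
  show "torsion d \<subseteq> (\<lambda>j. x [^] (j * m)) ` {..<d}"
  proof
    fix y
    assume y: "y \<in> torsion d"
    then obtain k where k: "k < card (carrier G)" "y = x [^] k"
      using gen by (auto simp: torsion_def)
    have "x [^] (k * d) = \<one>"
      using y k x(1) by (simp add: torsion_def nat_pow_pow)
    then have "d * m dvd d * k"
      using pow_eq_id[OF x(1)] x(2) m by (simp add: mult.commute)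
    then have "m dvd k"
      using k(1) m by (cases "d = 0") simp_all
    then obtain j where "k = m * j"
      by (rule dvdE)
    then show "y \<in> (\<lambda>j. x [^] (j * m)) ` {..<d}"
      using k m by (auto simp: mult.commute)
  qed
qed

lemma card_torsion:
  assumes "d dvd card (carrier G)"
  shows "card (torsion d) = d"
proof -
  obtain x where x: "x \<in> carrier G" "ord x = card (carrier G)"
    and gen: "carrier G = (\<lambda>k. x [^] k) ` {..<card (carrier G)}"
    using generator_exists by blast
  obtain m where m: "card (carrier G) = d * m"
    using assms by blast
  have "0 < m"
    using m card_carrier_pos by auto
  have "inj_on (\<lambda>j. x [^] (j * m)) {..<d}"
  proof (rule inj_onI)
    fix i j
    assume ij: "i \<in> {..<d}" "j \<in> {..<d}" "x [^] (i * m) = x [^] (j * m)"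
    then have "i * m < d * m" and "j * m < d * m"
      using \<open>0 < m\<close> by simp_all
    then have "i * m \<in> {0..ord x - 1}" and "j * m \<in> {0..ord x - 1}"
      unfolding atLeastAtMost_iff using x(2) m by linarith+
    then have "i * m = j * m"
      using inj_onD[OF ord_inj[OF x(1)]] ij(3) by blast
    then show "i = j"
      using \<open>0 < m\<close> by simp
  qed
  then show ?thesis
    using torsion_eq_image[OF x gen m] by (simp add: card_image)
qed

lemma subgroup_eq_torsion:
  assumes H: "subgroup H G"
  shows "H = torsion (card H)"
proof -
  interpret H: group "G\<lparr>carrier := H\<rparr>"
    using subgroup.subgroup_is_group[OF H is_group] .
  have "card H dvd card (carrier G)"
    using card_subgroup_dvd[OF finite_carrier H subgroup_self] subgroup.subset[OF H] by simp
  then have "card (torsion (card H)) = card H"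
    by (rule card_torsion)
  moreover have "H \<subseteq> torsion (card H)"
  proof
    fix h
    assume h: "h \<in> H"
    then have "h [^]\<^bsub>G\<lparr>carrier := H\<rparr>\<^esub> order (G\<lparr>carrier := H\<rparr>) = \<one>"
      using H.pow_order_eq_1[of h] by simp
    then show "h \<in> torsion (card H)"
      using h H subgroup.mem_carrier
      by (auto simp: torsion_def order_def nat_pow_consistent[symmetric])
  qed
  moreover have "finite (torsion (card H))"
    using finite_carrier by (auto simp: torsion_def)
  ultimately show ?thesis
    using card_subset_eq by metis
qed

end

lemma card_nested_subset_pairs:
  "card {(A, B). B \<subseteq> {..<n} \<and> card B = y \<and> A \<subseteq> B \<and> card A = x} = (n choose y) * (y choose x)"
proof -
  let ?Bs = "{B. B \<subseteq> {..<n} \<and> card B = y}"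
  have "{(A, B). B \<subseteq> {..<n} \<and> card B = y \<and> A \<subseteq> B \<and> card A = x}
      = (\<lambda>(B, A). (A, B)) ` (SIGMA B:?Bs. {A. A \<subseteq> B \<and> card A = x})"
    by auto
  moreover have "inj_on (\<lambda>(B, A). (A, B)) X" for X :: "(nat set \<times> nat set) set"
    by (auto simp: inj_on_def)
  moreover have "card (SIGMA B:?Bs. {A. A \<subseteq> B \<and> card A = x})
      = (\<Sum>B\<in>?Bs. card {A. A \<subseteq> B \<and> card A = x})"
  proof (rule card_SigmaI)
    show "\<forall>B\<in>?Bs. finite {A. A \<subseteq> B \<and> card A = x}"
      using finite_subset[of _ "{..<n}"] by simp
  qed simp
  moreover have "(\<Sum>B\<in>?Bs. card {A. A \<subseteq> B \<and> card A = x}) = (\<Sum>B\<in>?Bs. y choose x)"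
    using n_subsets finite_subset[of _ "{..<n}"] by (intro sum.cong) auto
  ultimately show ?thesis
    using n_subsets[of "{..<n}" y] by (simp add: card_image)
qed

locale squarefree_cyclic_group = finite_cyclic_group +
  fixes n :: nat and p :: "nat \<Rightarrow> nat"
  assumes primes: "\<forall>i<n. prime (p i)" and distinct_primes: "inj_on p {..<n}"
    and card_carrier: "card (carrier G) = (\<Prod>i<n. p i)"
begin

definition prime_support :: "'a set \<Rightarrow> nat set" where
  "prime_support H = {i \<in> {..<n}. p i dvd card H}"

definition level :: "'a set \<Rightarrow> nat" where
  "level H = card (prime_support H)"

definition subgroup_of_primes :: "nat set \<Rightarrow> 'a set" where
  "subgroup_of_primes A = torsion (\<Prod>i\<in>A. p i)"

lemma prime_support_subset: "prime_support H \<subseteq> {..<n}"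
  by (auto simp: prime_support_def)

lemma prime_support_prod:
  assumes "A \<subseteq> {..<n}"
  shows "{i \<in> {..<n}. p i dvd (\<Prod>i\<in>A. p i)} = A"
proof (rule primes_dvd_prod_primes[OF assms])
  show "finite A"
    using assms finite_subset by blast
qed (use primes distinct_primes in auto)

lemma card_subgroup_eq_prod:
  assumes "subgroup H G"
  shows "card H = (\<Prod>i\<in>prime_support H. p i)"
  unfolding prime_support_def
proof (rule dvd_prod_primes_eq)
  show "card H dvd (\<Prod>i\<in>{..<n}. p i)"
    using card_subgroup_dvd[OF finite_carrier assms subgroup_self] subgroup.subset[OF assms]
    by (simp add: card_carrier)
qed (use primes distinct_primes in auto)

lemma card_subgroup_of_primes: "A \<subseteq> {..<n} \<Longrightarrow> card (subgroup_of_primes A) = (\<Prod>i\<in>A. p i)"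
  unfolding subgroup_of_primes_def
  by (rule card_torsion) (auto simp: card_carrier intro: prod_dvd_prod_subset)

lemma prime_support_subgroup_of_primes:
  assumes "A \<subseteq> {..<n}"
  shows "prime_support (subgroup_of_primes A) = A"
  unfolding prime_support_def card_subgroup_of_primes[OF assms]
  by (rule prime_support_prod[OF assms])

lemma subgroup_eq_subgroup_of_primes: "subgroup H G \<Longrightarrow> H = subgroup_of_primes (prime_support H)"
  using subgroup_eq_torsion card_subgroup_eq_prod by (simp add: subgroup_of_primes_def)

lemma subgroup_of_primes_mono:
  assumes "B \<subseteq> {..<n}" and "A \<subseteq> B"
  shows "subgroup_of_primes A \<subseteq> subgroup_of_primes B"
proof
  fix y
  assume "y \<in> subgroup_of_primes A"
  then have y: "y \<in> carrier G" "y [^] (\<Prod>i\<in>A. p i) = \<one>"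
    by (simp_all add: subgroup_of_primes_def torsion_def)
  have "(\<Prod>i\<in>B. p i) = (\<Prod>i\<in>A. p i) * (\<Prod>i\<in>B - A. p i)"
    using prod.subset_diff[OF assms(2)] assms(1) finite_subset
    by (metis finite_lessThan mult.commute)
  then have "y [^] (\<Prod>i\<in>B. p i) = (y [^] (\<Prod>i\<in>A. p i)) [^] (\<Prod>i\<in>B - A. p i)"
    using y(1) by (simp only: nat_pow_pow)
  then show "y \<in> subgroup_of_primes B"
    using y by (simp add: subgroup_of_primes_def torsion_def)
qed

lemma prime_support_mono:
  "subgroup H G \<Longrightarrow> subgroup K G \<Longrightarrow> H \<subseteq> K \<Longrightarrow> prime_support H \<subseteq> prime_support K"
  unfolding prime_support_def using card_subgroup_dvd[OF finite_carrier] by (auto intro: dvd_trans)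

lemma level_mono: "subgroup H G \<Longrightarrow> subgroup K G \<Longrightarrow> H \<subseteq> K \<Longrightarrow> level H \<le> level K"
  unfolding level_def using prime_support_mono by (intro card_mono) (auto simp: prime_support_def)

lemma level_strict_mono:
  assumes "subgroup H G" and "subgroup K G" and "H \<subset> K"
  shows "level H < level K"
proof -
  have "prime_support H \<noteq> prime_support K"
    using assms subgroup_eq_subgroup_of_primes by (metis less_irrefl)
  then have "prime_support H \<subset> prime_support K"
    using prime_support_mono assms by blast
  then show ?thesis
    unfolding level_def by (intro psubset_card_mono) (auto simp: prime_support_def)
qed

lemma exists_prime_set_iff_level:
  assumes H: "subgroup H G"
  shows "(\<exists>A\<subseteq>{..<n}. card A = x \<and> card H = (\<Prod>i\<in>A. p i)) \<longleftrightarrow> level H = x"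
proof
  assume "\<exists>A\<subseteq>{..<n}. card A = x \<and> card H = (\<Prod>i\<in>A. p i)"
  then obtain A where A: "A \<subseteq> {..<n}" "card A = x" "card H = (\<Prod>i\<in>A. p i)"
    by blast
  have "prime_support H = {i \<in> {..<n}. p i dvd (\<Prod>i\<in>A. p i)}"
    by (simp only: prime_support_def A(3))
  also have "\<dots> = A"
    by (rule prime_support_prod[OF A(1)])
  finally show "level H = x"
    using A(2) by (simp add: level_def)
next
  assume "level H = x"
  then show "\<exists>A\<subseteq>{..<n}. card A = x \<and> card H = (\<Prod>i\<in>A. p i)"
    using card_subgroup_eq_prod[OF H] prime_support_subset by (auto simp: level_def)
qed

lemma arc_eq_level: "arc G p n x y = {(H, K) \<in> arrows G. level H = x \<and> level K = y}"
proof -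
  have "(H, K) \<in> arc G p n x y \<longleftrightarrow> (H, K) \<in> arrows G \<and> level H = x \<and> level K = y" for H K
  proof (cases "(H, K) \<in> arrows G")
    case True
    then have "subgroup H G" "subgroup K G"
      by (auto simp: arrows_def)
    then show ?thesis
      using True exists_prime_set_iff_level unfolding arc_def by blast
  qed (simp add: arc_def)
  then show ?thesis
    by auto
qed

lemma level_subgroup_of_primes: "A \<subseteq> {..<n} \<Longrightarrow> level (subgroup_of_primes A) = card A"
  by (simp add: level_def prime_support_subgroup_of_primes)

lemma arc_eq_image_subgroup_of_primes:
  "arc G p n x y = (\<lambda>(A, B). (subgroup_of_primes A, subgroup_of_primes B)) `
     {(A, B). B \<subseteq> {..<n} \<and> card B = y \<and> A \<subseteq> B \<and> card A = x}"
  (is "_ = ?subgroups ` ?pairs")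
proof
  show "arc G p n x y \<subseteq> ?subgroups ` ?pairs"
  proof
    fix q
    assume "q \<in> arc G p n x y"
    then obtain H K where q: "q = (H, K)" "subgroup H G" "subgroup K G" "H \<subseteq> K"
      and "level H = x" "level K = y"
      by (auto simp: arc_eq_level arrows_def)
    then have "(prime_support H, prime_support K) \<in> ?pairs"
      using prime_support_mono prime_support_subset by (auto simp: level_def)
    moreover have "subgroup_of_primes (prime_support H) = H"
      and "subgroup_of_primes (prime_support K) = K"
      using subgroup_eq_subgroup_of_primes[symmetric] q(2,3) by blast+
    then have "q = ?subgroups (prime_support H, prime_support K)"
      using q(1) by simp
    ultimately show "q \<in> ?subgroups ` ?pairs"
      by (rule rev_image_eqI)
  qed
  show "?subgroups ` ?pairs \<subseteq> arc G p n x y"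
  proof
    fix q
    assume "q \<in> ?subgroups ` ?pairs"
    then obtain A B where q: "q = (subgroup_of_primes A, subgroup_of_primes B)"
      and B: "B \<subseteq> {..<n}" "card B = y" and A: "A \<subseteq> B" "card A = x"
      by auto
    then have "subgroup_of_primes A \<subseteq> subgroup_of_primes B"
      and "level (subgroup_of_primes A) = x" and "level (subgroup_of_primes B) = y"
      using subgroup_of_primes_mono level_subgroup_of_primes by auto
    then show "q \<in> arc G p n x y"
      using q subgroup_torsion by (simp add: arc_eq_level arrows_def subgroup_of_primes_def)
  qed
qed

lemma card_arc:
  assumes "x \<le> y" and "y \<le> n"
  shows "card (arc G p n x y) = multinom3 n x y"
proof -
  let ?pairs = "{(A, B). B \<subseteq> {..<n} \<and> card B = y \<and> A \<subseteq> B \<and> card A = x}"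
  have "inj_on (\<lambda>(A, B). (subgroup_of_primes A, subgroup_of_primes B)) ?pairs"
  proof (rule inj_onI)
    fix q q'
    assume "q \<in> ?pairs" "q' \<in> ?pairs"
      and eq: "(case q of (A, B) \<Rightarrow> (subgroup_of_primes A, subgroup_of_primes B)) =
        (case q' of (A, B) \<Rightarrow> (subgroup_of_primes A, subgroup_of_primes B))"
    then obtain A B A' B' where "q = (A, B)" "q' = (A', B')"
      and "A \<subseteq> {..<n}" "B \<subseteq> {..<n}" "A' \<subseteq> {..<n}" "B' \<subseteq> {..<n}"
      by auto
    moreover from this
    have "prime_support (subgroup_of_primes A) = prime_support (subgroup_of_primes A')"
      and "prime_support (subgroup_of_primes B) = prime_support (subgroup_of_primes B')"
      using eq by simp_all
    ultimately show "q = q'"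
      by (simp add: prime_support_subgroup_of_primes)
  qed
  then have "card (arc G p n x y) = card ?pairs"
    unfolding arc_eq_image_subgroup_of_primes by (rule card_image)
  then show ?thesis
    using card_nested_subset_pairs multinom3_eq_choose[OF assms] by simp
qed

end

section \<open>Rainbows give minimal generating sets\<close>

lemma transfer_system_Inter:
  assumes ts: "\<And>T. T \<in> F \<Longrightarrow> transfer_system G T" and "F \<noteq> {}"
  shows "transfer_system G (\<Inter>F)"
proof -
  have "\<Inter>F \<subseteq> arrows G"
    using ts assms(2) unfolding transfer_system_def by blast
  moreover have "\<forall>H. subgroup H G \<longrightarrow> (H, H) \<in> \<Inter>F"
    using ts unfolding transfer_system_def by blast
  moreover have "\<forall>H K L. (H, K) \<in> \<Inter>F \<longrightarrow> (K, L) \<in> \<Inter>F \<longrightarrow> (H, L) \<in> \<Inter>F"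
    using ts unfolding transfer_system_def by blast
  moreover have "\<forall>H K g. (H, K) \<in> \<Inter>F \<longrightarrow> g \<in> carrier G \<longrightarrow>
      (conj_set G g H, conj_set G g K) \<in> \<Inter>F"
    using ts unfolding transfer_system_def by blast
  moreover have "\<forall>H K L. (H, K) \<in> \<Inter>F \<longrightarrow> subgroup L G \<longrightarrow> L \<subseteq> K \<longrightarrow> (H \<inter> L, L) \<in> \<Inter>F"
    using ts unfolding transfer_system_def by blast
  ultimately show ?thesis
    unfolding transfer_system_def by blast
qed

lemma transfer_system_subset_arrows: "transfer_system G T \<Longrightarrow> T \<subseteq> arrows G"
  by (simp add: transfer_system_def)

lemma generated_ts_least: "transfer_system G T \<Longrightarrow> S \<subseteq> T \<Longrightarrow> generated_ts G S \<subseteq> T"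
  unfolding generated_ts_def by blast

lemma subset_generated_ts: "S \<subseteq> generated_ts G S"
  unfolding generated_ts_def by blast

lemma (in comm_group) conj_set_eq:
  assumes "H \<subseteq> carrier G" and "g \<in> carrier G"
  shows "conj_set G g H = H"
proof -
  have "g \<otimes> h \<otimes> inv g = h" if "h \<in> H" for h
    using that assms m_comm[of g h] by (auto simp: m_assoc)
  then show ?thesis
    unfolding conj_set_def by (simp cong: image_cong)
qed

lemma (in comm_group) transfer_system_arrows: "transfer_system G (arrows G)"
  unfolding transfer_system_def arrows_def
  by (auto simp: conj_set_eq subgroup.subset intro: subgroups_Inter_pair)

lemma (in comm_group) transfer_system_generated_ts:
  "S \<subseteq> arrows G \<Longrightarrow> transfer_system G (generated_ts G S)"
  unfolding generated_ts_def using transfer_system_arrows by (intro transfer_system_Inter) auto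

lemma finite_arrows: "finite (carrier G) \<Longrightarrow> finite (arrows G)"
  by (rule finite_subset[of _ "Pow (carrier G) \<times> Pow (carrier G)"])
    (auto simp: arrows_def dest: subgroup.subset)

context squarefree_cyclic_group
begin

text \<open>Levels strictly increase along non-identity arrows, and restricting an arrow to a proper
  subgroup of its target lowers the target level without raising the source level.\<close>

definition arrows_avoiding :: "'a set \<Rightarrow> 'a set \<Rightarrow> ('a set \<times> 'a set) set" where
  "arrows_avoiding H\<^sub>0 K\<^sub>0 = {(A, B) \<in> arrows G. A = B \<or> level A < level H\<^sub>0 \<or> level B < level K\<^sub>0
     \<or> (level A = level H\<^sub>0 \<and> level B = level K\<^sub>0 \<and> (A, B) \<noteq> (H\<^sub>0, K\<^sub>0))}"

lemma transfer_system_arrows_avoiding: "transfer_system G (arrows_avoiding H\<^sub>0 K\<^sub>0)"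
  unfolding transfer_system_def
proof (intro conjI allI impI)
  show "arrows_avoiding H\<^sub>0 K\<^sub>0 \<subseteq> arrows G"
    by (auto simp: arrows_avoiding_def)
  show "(H, H) \<in> arrows_avoiding H\<^sub>0 K\<^sub>0" if "subgroup H G" for H
    using that by (simp add: arrows_avoiding_def arrows_def)
  show "(A, C) \<in> arrows_avoiding H\<^sub>0 K\<^sub>0"
    if AB: "(A, B) \<in> arrows_avoiding H\<^sub>0 K\<^sub>0" and BC: "(B, C) \<in> arrows_avoiding H\<^sub>0 K\<^sub>0" for A B C
  proof (cases "A = B \<or> B = C")
    case False
    then have "level A < level B" and "level B < level C"
      using AB BC level_strict_mono by (auto simp: arrows_avoiding_def arrows_def)
    then show ?thesis
      using AB BC by (auto simp: arrows_avoiding_def arrows_def)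
  qed (use AB BC in auto)
  show "(conj_set G g A, conj_set G g B) \<in> arrows_avoiding H\<^sub>0 K\<^sub>0"
    if "(A, B) \<in> arrows_avoiding H\<^sub>0 K\<^sub>0" and "g \<in> carrier G" for A B g
    using that comm_group.conj_set_eq[OF comm_group]
    by (auto simp: arrows_avoiding_def arrows_def subgroup.subset)
  show "(A \<inter> L, L) \<in> arrows_avoiding H\<^sub>0 K\<^sub>0"
    if AB: "(A, B) \<in> arrows_avoiding H\<^sub>0 K\<^sub>0" and L: "subgroup L G" "L \<subseteq> B" for A B L
  proof (cases "L = B")
    case True
    then show ?thesis
      using AB by (auto simp: arrows_avoiding_def arrows_def Int_absorb2)
  next
    case False
    have A: "subgroup A G" "subgroup B G" "A \<subseteq> B"
      using AB by (auto simp: arrows_avoiding_def arrows_def)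
    then have "subgroup (A \<inter> L) G"
      using L(1) subgroups_Inter_pair by blast
    moreover have "level (A \<inter> L) \<le> level A"
      using level_mono[OF calculation A(1)] by simp
    moreover have "level L < level B"
      using level_strict_mono[OF L(1) A(2)] L(2) False by blast
    ultimately show ?thesis
      using AB L by (auto simp: arrows_avoiding_def arrows_def)
  qed
qed

lemma rainbow_arrows_subset: "rainbow_arrows G p n R \<subseteq> arrows G"
  by (auto simp: rainbow_arrows_def arc_def)

lemma card_rainbow_arrows:
  assumes R: "rainbow n R"
  shows "card (rainbow_arrows G p n R) = rainbow_size n R"
proof -
  have "card (rainbow_arrows G p n R) = (\<Sum>q\<in>R. card (case q of (x, y) \<Rightarrow> arc G p n x y))"
    unfolding rainbow_arrows_def
  proof (rule card_UN_disjoint)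
    show "finite R"
      using R by (simp add: rainbow_def)
    have "finite (arc G p n x y)" for x y
      by (rule finite_subset[OF _ finite_arrows[OF finite_carrier]]) (auto simp: arc_def)
    then show "\<forall>q\<in>R. finite (case q of (x, y) \<Rightarrow> arc G p n x y)"
      by (auto split: prod.split)
  qed (auto simp: arc_eq_level)
  also have "\<dots> = rainbow_size n R"
    unfolding rainbow_size_def using rainbow_arcD[OF R] card_arc
    by (intro sum.cong) (auto simp: less_imp_le split: prod.split)
  finally show ?thesis .
qed

lemma min_gen_set_rainbow_arrows:
  assumes R: "rainbow n R"
  shows "min_gen_set G (generated_ts G (rainbow_arrows G p n R)) (rainbow_arrows G p n R)"
  unfolding min_gen_set_def
proof (intro conjI ballI)
  let ?S = "rainbow_arrows G p n R"
  show "?S \<subseteq> generated_ts G ?S"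
    by (rule subset_generated_ts)
  show "case q of (H, K) \<Rightarrow> H \<noteq> K" if "q \<in> ?S" for q
    using that rainbow_arcD[OF R] by (fastforce simp: rainbow_arrows_def arc_eq_level)
  show "generated_ts G (?S - {s}) \<noteq> generated_ts G ?S" if s: "s \<in> ?S" for s
  proof -
    obtain H\<^sub>0 K\<^sub>0 x\<^sub>0 y\<^sub>0 where s_def: "s = (H\<^sub>0, K\<^sub>0)" and arc0: "(x\<^sub>0, y\<^sub>0) \<in> R"
      and levels: "level H\<^sub>0 = x\<^sub>0" "level K\<^sub>0 = y\<^sub>0" "(H\<^sub>0, K\<^sub>0) \<in> arrows G"
      using s by (auto simp: rainbow_arrows_def arc_eq_level)
    \<comment> \<open>every other arc of the rainbow lies strictly inside or strictly outside \<open>x\<^sub>0 \<rightarrow> y\<^sub>0\<close>\<close>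
    have "?S - {s} \<subseteq> arrows_avoiding H\<^sub>0 K\<^sub>0"
      using rainbow_nestedD[OF R _ arc0] levels s_def
      by (fastforce simp: rainbow_arrows_def arc_eq_level arrows_avoiding_def)
    then have "generated_ts G (?S - {s}) \<subseteq> arrows_avoiding H\<^sub>0 K\<^sub>0"
      by (rule generated_ts_least[OF transfer_system_arrows_avoiding])
    moreover have "s \<notin> arrows_avoiding H\<^sub>0 K\<^sub>0"
      using rainbow_arcD[OF R arc0] levels s_def by (auto simp: arrows_avoiding_def)
    moreover have "s \<in> generated_ts G ?S"
      using s subset_generated_ts by blast
    ultimately show ?thesis
      by blast
  qed
qed simp

lemma rainbow_attains: "rainbow n R \<Longrightarrow> rainbow_attains G p n R"
  unfolding rainbow_attains_def using min_gen_set_rainbow_arrows card_rainbow_arrows by simp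

lemma rainbow_size_le_complexity:
  assumes R: "rainbow n R"
  shows "rainbow_size n R \<le> complexity G"
proof -
  let ?S = "rainbow_arrows G p n R"
  let ?T = "generated_ts G ?S"
  have ts: "transfer_system G ?T"
    using comm_group.transfer_system_generated_ts[OF comm_group rainbow_arrows_subset] .
  have fin_arrows: "finite (arrows G)"
    using finite_arrows[OF finite_carrier] .
  have "{card S | S. min_gen_set G ?T S} \<subseteq> card ` Pow (arrows G)"
    using transfer_system_subset_arrows[OF ts] by (auto simp: min_gen_set_def)
  then have "finite {card S | S. min_gen_set G ?T S}"
    using fin_arrows finite_subset by blast
  then have "card ?S \<le> mfrak G ?T"
    unfolding mfrak_def by (rule Max_ge) (use min_gen_set_rainbow_arrows[OF R] in blast)
  moreover have "{mfrak G T | T. transfer_system G T} \<subseteq> mfrak G ` Pow (arrows G)"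
    using transfer_system_subset_arrows by blast
  then have "finite {mfrak G T | T. transfer_system G T}"
    using fin_arrows finite_subset by blast
  then have "mfrak G ?T \<le> complexity G"
    unfolding complexity_def by (rule Max_ge) (use ts in blast)
  ultimately show ?thesis
    using card_rainbow_arrows[OF R] by simp
qed

end

theorem theorem5p14:
  fixes G :: "('a, 'b) monoid_scheme" and n :: nat and p :: "nat \<Rightarrow> nat"
  assumes "group G" and "finite (carrier G)" and "cyclic_group G"
    and "n \<ge> 1" and "\<forall>i<n. prime (p i)" and "inj_on p {..<n}"
    and "card (carrier G) = (\<Prod>i<n. p i)"
  shows "complexity G \<ge> rainbow_bound n
    \<and> rainbow_bound n = Max (rainbow_size n ` {R. rainbow n R})
    \<and> (odd n \<longrightarrow>
         rainbow n (complete_rainbow n)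
       \<and> rainbow_size n (complete_rainbow n) = rainbow_bound n
       \<and> rainbow_attains G p n (complete_rainbow n))
    \<and> (even n \<and> n \<ge> 8 \<longrightarrow>
         rainbow n (rainbow_R n (n div 2))
       \<and> rainbow_size n (rainbow_R n (n div 2)) = rainbow_bound n
       \<and> rainbow_attains G p n (rainbow_R n (n div 2))
       \<and> (\<forall>R. rainbow n R \<and> rainbow_size n R = rainbow_bound n \<longrightarrow> R = rainbow_R n (n div 2)))
    \<and> (n \<in> {2, 4, 6} \<longrightarrow>
         (\<forall>x \<in> {0, n}.
            rainbow n (rainbow_R n x)
          \<and> rainbow_size n (rainbow_R n x) = rainbow_bound n
          \<and> rainbow_attains G p n (rainbow_R n x)))"
proof -
  interpret squarefree_cyclic_group G n p
    using assms by (simp add: squarefree_cyclic_group_def squarefree_cyclic_group_axioms_def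
        finite_cyclic_group_def finite_cyclic_group_axioms_def)
  obtain R\<^sub>0 where R\<^sub>0: "rainbow n R\<^sub>0" "rainbow_size n R\<^sub>0 = rainbow_bound n"
    using complete_rainbow_optimal[OF assms(4)] rainbow_R_end_optimal[of n 0]
    by (cases "n \<in> {2, 4, 6}") auto
  have "rainbow_bound n = Max (rainbow_size n ` {R. rainbow n R})"
  proof (rule sym, rule Max_eqI)
    show "finite (rainbow_size n ` {R. rainbow n R})"
      using finite_rainbows by simp
    show "rainbow_bound n \<in> rainbow_size n ` {R. rainbow n R}"
      using R\<^sub>0 by (auto intro: image_eqI[of _ _ R\<^sub>0])
  qed (use rainbow_size_le_bound[OF assms(4)] in auto)
  moreover have "rainbow_bound n \<le> complexity G"
    using rainbow_size_le_complexity[OF R\<^sub>0(1)] R\<^sub>0(2) by simp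
  moreover have "rainbow n (complete_rainbow n)
      \<and> rainbow_size n (complete_rainbow n) = rainbow_bound n
      \<and> rainbow_attains G p n (complete_rainbow n)" if "n \<notin> {2, 4, 6}"
    using complete_rainbow_optimal[OF assms(4) that] rainbow_attains by blast
  moreover have "n \<notin> {2, 4, 6}" if "odd n \<or> 8 \<le> n"
    using that by auto
  moreover have "rainbow_R n (n div 2) = complete_rainbow n" if "even n" and "8 \<le> n"
    using that by (intro rainbow_R_half) auto
  ultimately show ?thesis
    using optimal_rainbow_unique rainbow_R_end_optimal rainbow_attains by auto
qed

end
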